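(* For a commutative ring $R$ with nilradical $\mathfrak N$ the following are equivalent: (i) $R$ is a GPP-ring; (ii) $R$ is a GPF-ring and $\operatorname{Min}(R)$ is Zariski quasi-compact; (iii) $R$ is a quasi p.f. ring and $\operatorname{Min}(R)$ is Zariski quasi-compact; (iv) $R/\mathfrak N$ is a p.p. ring and $R_{\mathfrak m}$ is a primary ring for every maximal ideal $\mathfrak m$ of $R$.
   Context: $A$ is a p.p. ring if every principal ideal is projective. $R$ is a GPP-ring (resp. GPF-ring) if for each $f\in R$ there is $n\geq1$ with $Rf^n$ projective (resp. flat). An ideal $I$ is quasi-pure if for each $f\in I$ there is $g\in I$ with $f(1-g)$ nilpotent; $R$ is quasi p.f. if $\operatorname{Ann}(f)$ is quasi-pure for all $f$. A ring is primary if its zero ideal is primary (every zero-divisor nilpotent). $\operatorname{Min}(R)$ is the set of minimal primes with the subspace Zariski topology. *)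

theory Defs
  imports "HOL-Algebra.QuotRing"
begin

definition nilpotent_el :: "('a, 'm) ring_scheme \<Rightarrow> 'a \<Rightarrow> bool" where
  "nilpotent_el R x \<longleftrightarrow> x \<in> carrier R \<and> (\<exists>n::nat. x [^]\<^bsub>R\<^esub> n = \<zero>\<^bsub>R\<^esub>)"

definition nilradical :: "('a, 'm) ring_scheme \<Rightarrow> 'a set" where
  "nilradical R = {x \<in> carrier R. nilpotent_el R x}"

definition annihilator :: "('a, 'm) ring_scheme \<Rightarrow> 'a \<Rightarrow> 'a set" where
  "annihilator R f = {g \<in> carrier R. g \<otimes>\<^bsub>R\<^esub> f = \<zero>\<^bsub>R\<^esub>}"

definition free_mod :: "('a, 'm) ring_scheme \<Rightarrow> 'b set \<Rightarrow> ('b \<Rightarrow> 'a) set" where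
  "free_mod R Bs = {c. (\<forall>x\<in>Bs. c x \<in> carrier R) \<and> (\<forall>x. x \<notin> Bs \<longrightarrow> c x = \<zero>\<^bsub>R\<^esub>)
                       \<and> finite {x \<in> Bs. c x \<noteq> \<zero>\<^bsub>R\<^esub>}}"

text \<open>An ideal I (viewed as R-module) is projective iff it is a direct summand of a free
  R-module, i.e. there is a free module F = R^(Bs) together with R-linear maps
  s : I \<rightarrow> F and p : F \<rightarrow> I with p \<circ> s = id.  An R-linear map p : R^(Bs) \<rightarrow> I is determined by
  the images g x \<in> I of the basis vectors: p c = \<Sum>_x c x \<cdot> g x.  Since I is generated by
  its own elements, an index set Bs inside the carrier type suffices.\<close>
definition projective_ideal :: "('a, 'm) ring_scheme \<Rightarrow> 'a set \<Rightarrow> bool" where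
  "projective_ideal R I \<longleftrightarrow>
     (\<exists>(Bs :: 'a set) (g :: 'a \<Rightarrow> 'a) (s :: 'a \<Rightarrow> 'a \<Rightarrow> 'a).
        (\<forall>x\<in>Bs. g x \<in> I)
      \<and> (\<forall>u\<in>I. s u \<in> free_mod R Bs)
      \<and> (\<forall>u\<in>I. \<forall>v\<in>I. \<forall>x\<in>Bs. s (u \<oplus>\<^bsub>R\<^esub> v) x = s u x \<oplus>\<^bsub>R\<^esub> s v x)
      \<and> (\<forall>a\<in>carrier R. \<forall>u\<in>I. \<forall>x\<in>Bs. s (a \<otimes>\<^bsub>R\<^esub> u) x = a \<otimes>\<^bsub>R\<^esub> s u x)
      \<and> (\<forall>u\<in>I. finsum R (\<lambda>x. s u x \<otimes>\<^bsub>R\<^esub> g x) {x \<in> Bs. s u x \<noteq> \<zero>\<^bsub>R\<^esub>} = u))"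

text \<open>Flatness of an ideal I (as R-module), via the equational criterion for flatness:
  every R-linear relation \<Sum> r_i x_i = 0 among elements x_i of I is trivial, i.e.
  x_i = \<Sum>_j a_ij y_j with y_j \<in> I and \<Sum>_i r_i a_ij = 0 for all j.\<close>
definition flat_ideal :: "('a, 'm) ring_scheme \<Rightarrow> 'a set \<Rightarrow> bool" where
  "flat_ideal R I \<longleftrightarrow>
     (\<forall>(n::nat) r x. (\<forall>i<n. r i \<in> carrier R \<and> x i \<in> I)
        \<and> finsum R (\<lambda>i. r i \<otimes>\<^bsub>R\<^esub> x i) {..<n} = \<zero>\<^bsub>R\<^esub> \<longrightarrow>
        (\<exists>(m::nat) a y. (\<forall>j<m. y j \<in> I) \<and> (\<forall>i<n. \<forall>j<m. a i j \<in> carrier R)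
          \<and> (\<forall>i<n. x i = finsum R (\<lambda>j. a i j \<otimes>\<^bsub>R\<^esub> y j) {..<m})
          \<and> (\<forall>j<m. finsum R (\<lambda>i. r i \<otimes>\<^bsub>R\<^esub> a i j) {..<n} = \<zero>\<^bsub>R\<^esub>)))"

definition pp_ring :: "('a, 'm) ring_scheme \<Rightarrow> bool" where
  "pp_ring R \<longleftrightarrow> (\<forall>f\<in>carrier R. projective_ideal R (PIdl\<^bsub>R\<^esub> f))"

definition GPP_ring :: "('a, 'm) ring_scheme \<Rightarrow> bool" where
  "GPP_ring R \<longleftrightarrow> (\<forall>f\<in>carrier R. \<exists>n::nat. n \<ge> 1 \<and> projective_ideal R (PIdl\<^bsub>R\<^esub> (f [^]\<^bsub>R\<^esub> n)))"

definition GPF_ring :: "('a, 'm) ring_scheme \<Rightarrow> bool" where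
  "GPF_ring R \<longleftrightarrow> (\<forall>f\<in>carrier R. \<exists>n::nat. n \<ge> 1 \<and> flat_ideal R (PIdl\<^bsub>R\<^esub> (f [^]\<^bsub>R\<^esub> n)))"

definition quasi_pure :: "('a, 'm) ring_scheme \<Rightarrow> 'a set \<Rightarrow> bool" where
  "quasi_pure R I \<longleftrightarrow>
     (\<forall>f\<in>I. \<exists>g\<in>I. nilpotent_el R (f \<otimes>\<^bsub>R\<^esub> (\<one>\<^bsub>R\<^esub> \<ominus>\<^bsub>R\<^esub> g)))"

definition quasi_pf_ring :: "('a, 'm) ring_scheme \<Rightarrow> bool" where
  "quasi_pf_ring R \<longleftrightarrow> (\<forall>f\<in>carrier R. quasi_pure R (annihilator R f))"

text \<open>Primary ring: the zero ideal is primary (proper, and every zero-divisor is nilpotent).\<close>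
definition primary_ring :: "('a, 'm) ring_scheme \<Rightarrow> bool" where
  "primary_ring R \<longleftrightarrow> \<one>\<^bsub>R\<^esub> \<noteq> \<zero>\<^bsub>R\<^esub> \<and>
     (\<forall>a\<in>carrier R. \<forall>b\<in>carrier R. a \<otimes>\<^bsub>R\<^esub> b = \<zero>\<^bsub>R\<^esub> \<longrightarrow> a = \<zero>\<^bsub>R\<^esub> \<or> nilpotent_el R b)"

definition min_primes :: "('a, 'm) ring_scheme \<Rightarrow> 'a set set" where
  "min_primes R = {P. primeideal P R \<and> (\<forall>Q. primeideal Q R \<and> Q \<subseteq> P \<longrightarrow> Q = P)}"

definition zariski_open :: "('a, 'm) ring_scheme \<Rightarrow> 'a set set \<Rightarrow> bool" where
  "zariski_open R U \<longleftrightarrow> (\<exists>S \<subseteq> carrier R. U = {P. primeideal P R \<and> \<not> S \<subseteq> P})"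

text \<open>Min(R) is quasi-compact in the subspace topology: every cover of Min(R) by (traces of)
  Zariski-open sets has a finite subcover.\<close>
definition min_quasi_compact :: "('a, 'm) ring_scheme \<Rightarrow> bool" where
  "min_quasi_compact R \<longleftrightarrow>
     (\<forall>\<U>. (\<forall>U\<in>\<U>. zariski_open R U) \<and> min_primes R \<subseteq> \<Union>\<U> \<longrightarrow>
        (\<exists>\<F>\<subseteq>\<U>. finite \<F> \<and> min_primes R \<subseteq> \<Union>\<F>))"

definition loc_rel :: "('a, 'm) ring_scheme \<Rightarrow> 'a set \<Rightarrow> (('a \<times> 'a) \<times> ('a \<times> 'a)) set" where
  "loc_rel R P = {((a, s), (b, t)). a \<in> carrier R \<and> b \<in> carrier R
      \<and> s \<in> carrier R - P \<and> t \<in> carrier R - P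
      \<and> (\<exists>u\<in>carrier R - P. u \<otimes>\<^bsub>R\<^esub> (a \<otimes>\<^bsub>R\<^esub> t \<ominus>\<^bsub>R\<^esub> b \<otimes>\<^bsub>R\<^esub> s) = \<zero>\<^bsub>R\<^esub>)}"

definition loc_class :: "('a, 'm) ring_scheme \<Rightarrow> 'a set \<Rightarrow> 'a \<Rightarrow> 'a \<Rightarrow> ('a \<times> 'a) set" where
  "loc_class R P a s = loc_rel R P `` {(a, s)}"

definition loc_mult :: "('a, 'm) ring_scheme \<Rightarrow> 'a set \<Rightarrow> ('a \<times> 'a) set \<Rightarrow> ('a \<times> 'a) set \<Rightarrow> ('a \<times> 'a) set" where
  "loc_mult R P U V = \<Union>{loc_class R P (a \<otimes>\<^bsub>R\<^esub> b) (s \<otimes>\<^bsub>R\<^esub> t) | a s b t. (a, s) \<in> U \<and> (b, t) \<in> V}"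

definition loc_add :: "('a, 'm) ring_scheme \<Rightarrow> 'a set \<Rightarrow> ('a \<times> 'a) set \<Rightarrow> ('a \<times> 'a) set \<Rightarrow> ('a \<times> 'a) set" where
  "loc_add R P U V = \<Union>{loc_class R P (a \<otimes>\<^bsub>R\<^esub> t \<oplus>\<^bsub>R\<^esub> b \<otimes>\<^bsub>R\<^esub> s) (s \<otimes>\<^bsub>R\<^esub> t) | a s b t. (a, s) \<in> U \<and> (b, t) \<in> V}"

definition localization :: "('a, 'm) ring_scheme \<Rightarrow> 'a set \<Rightarrow> ('a \<times> 'a) set ring" where
  "localization R P =
    \<lparr> carrier = (carrier R \<times> (carrier R - P)) // loc_rel R P,
      mult = loc_mult R P,
      one = loc_class R P \<one>\<^bsub>R\<^esub> \<one>\<^bsub>R\<^esub>,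
      zero = loc_class R P \<zero>\<^bsub>R\<^esub> \<one>\<^bsub>R\<^esub>,
      add = loc_add R P \<rparr>"

end

theory Submission
  imports Defs "HOL-Algebra.Ring_Divisibility"
begin

text \<open>
  Everything reduces to elementwise conditions. \<open>Rf\<close> is projective iff some \<open>e\<close> has \<open>e f = f\<close>
  and \<open>Ann f \<subseteq> Ann e\<close>; it is flat iff every \<open>a \<in> Ann f\<close> is killed by such an \<open>e\<close>; and
  \<open>R\<^sub>m\<close> is primary iff \<open>a b = 0\<close> forces \<open>u a = 0\<close> or \<open>u b\<^sup>k = 0\<close> for some \<open>u \<notin> m\<close>.

  The pivot is an element \<open>e\<close> that behaves, modulo every minimal prime, like the indicator
  function of \<open>D(f)\<close>. If \<open>Rf\<^sup>n\<close> is projective, the element \<open>e\<close> above is idempotent and is such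
  an indicator; indicators for all \<open>f\<close> make every basic open set of \<open>Min(R)\<close> closed, which
  forces quasi-compactness. Conversely, in a quasi p.f. ring with \<open>Min(R)\<close> quasi-compact,
  finitely many elements killing powers of \<open>f\<close> cover \<open>V(f) \<inter> Min(R)\<close>, and the product of the
  corresponding factors \<open>1 - g\<close> is an indicator; indicators make \<open>R/N\<close> a p.p. ring.
  Finally, an element that is idempotent modulo \<open>N\<close> lifts to a genuine idempotent \<open>d\<close>
  with \<open>d f\<^sup>n = f\<^sup>n\<close>, and \<open>d\<close> kills \<open>Ann(f\<^sup>n)\<close> because it does so locally at every maximal
  ideal, where the localization is primary.
\<close>

section \<open>Prime and maximal ideals\<close>

text \<open>Inside \<^locale>\<open>ideal\<close> the names \<open>zero_closed\<close> and \<open>a_closed\<close> refer to the carrier of the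
  ring, not to the ideal, hence the following names.\<close>

lemma (in ideal) I_zero_closed: "\<zero> \<in> I"
  by simp

lemma (in ideal) I_add_closed: "a \<in> I \<Longrightarrow> b \<in> I \<Longrightarrow> a \<oplus> b \<in> I"
  by simp

lemma (in ideal) I_minus_closed: "a \<in> I \<Longrightarrow> b \<in> I \<Longrightarrow> a \<ominus> b \<in> I"
  by (simp add: a_minus_def)

lemma (in primeideal) one_notin: "\<one> \<notin> I"
  using I_notcarr one_imp_carrier by blast

lemma (in primeideal) compl_mult_closed:
  "a \<in> carrier R - I \<Longrightarrow> b \<in> carrier R - I \<Longrightarrow> a \<otimes> b \<in> carrier R - I"
  using I_prime by blast

lemma (in primeideal) pow_mem_imp_mem:
  assumes "x \<in> carrier R" and "x [^] (n::nat) \<in> I"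
  shows "x \<in> I"
  using assms(2)
proof (induction n)
  case 0
  then show ?case using one_notin by simp
next
  case (Suc n)
  then show ?case using I_prime[of "x [^] n" x] assms(1) by auto
qed

lemma (in primeideal) compl_pow_closed:
  "x \<in> carrier R - I \<Longrightarrow> x [^] (n::nat) \<in> carrier R - I"
  using pow_mem_imp_mem[of x n] by auto

lemma (in primeideal) nilpotent_mem: "nilpotent_el R x \<Longrightarrow> x \<in> I"
proof -
  assume "nilpotent_el R x"
  then obtain n :: nat where "x \<in> carrier R" "x [^] n = \<zero>" unfolding nilpotent_el_def by blast
  then show "x \<in> I" using pow_mem_imp_mem[of x n] I_zero_closed by simp
qed

lemma (in primeideal) one_minus_notin:
  assumes "e \<in> I"
  shows "\<one> \<ominus> e \<notin> I"
proof
  assume "\<one> \<ominus> e \<in> I"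
  then have "e \<oplus> (\<one> \<ominus> e) \<in> I" by (rule I_add_closed[OF assms])
  moreover have "e \<oplus> (\<one> \<ominus> e) = \<one>" using Icarr[OF assms] by algebra
  ultimately show False using one_notin by simp
qed

context cring
begin

lemma exists_maximal_ideal_disjoint:
  assumes I: "ideal I R" "I \<inter> S = {}"
  obtains M where "ideal M R" "I \<subseteq> M" "M \<inter> S = {}"
    "\<And>J. ideal J R \<Longrightarrow> M \<subseteq> J \<Longrightarrow> J \<inter> S = {} \<Longrightarrow> J = M"
proof -
  let ?A = "{J. ideal J R \<and> I \<subseteq> J \<and> J \<inter> S = {}}"
  have "\<exists>M\<in>?A. \<forall>X\<in>?A. M \<subseteq> X \<longrightarrow> X = M"
  proof (rule subset_Zorn)
    fix C assume C: "subset.chain ?A C"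
    show "\<exists>U\<in>?A. \<forall>X\<in>C. X \<subseteq> U"
    proof (cases "C = {}")
      case True then show ?thesis using I by (intro bexI[of _ I]) auto
    next
      case False
      have ch: "subset.chain {J. ideal J R} C" using C unfolding subset_chain_def by auto
      have "ideal (\<Union>C) R" using chain_Union_is_ideal[OF ch] False by simp
      moreover have "I \<subseteq> \<Union>C" using False C unfolding subset_chain_def by blast
      moreover have "\<Union>C \<inter> S = {}" using C unfolding subset_chain_def by auto
      ultimately show ?thesis by (intro bexI[of _ "\<Union>C"]) auto
    qed
  qed
  then obtain M where "M \<in> ?A" and "\<forall>X\<in>?A. M \<subseteq> X \<longrightarrow> X = M" ..
  then show thesis using that[of M] by blast
qed

lemma ideal_add_PIdl:
  assumes "ideal M R" and "x \<in> carrier R"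
  shows "ideal (M <+>\<^bsub>R\<^esub> PIdl x) R" and "M \<subseteq> M <+>\<^bsub>R\<^esub> PIdl x" and "x \<in> M <+>\<^bsub>R\<^esub> PIdl x"
proof -
  interpret M: ideal M R by fact
  show "ideal (M <+>\<^bsub>R\<^esub> PIdl x) R" using add_ideals[OF assms(1) cgenideal_ideal[OF assms(2)]] .
  have "\<zero> \<in> PIdl x"
    using assms(2) l_null[symmetric] unfolding cgenideal_def by blast
  show "M \<subseteq> M <+>\<^bsub>R\<^esub> PIdl x"
  proof
    fix m assume "m \<in> M"
    moreover have "m = m \<oplus> \<zero>" using M.Icarr[OF \<open>m \<in> M\<close>] by simp
    ultimately show "m \<in> M <+>\<^bsub>R\<^esub> PIdl x"
      using \<open>\<zero> \<in> PIdl x\<close> unfolding set_add_def' by blast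
  qed
  have "x \<in> PIdl x" using cgenideal_self[OF assms(2)] .
  moreover have "x = \<zero> \<oplus> x" using assms(2) by simp
  ultimately show "x \<in> M <+>\<^bsub>R\<^esub> PIdl x"
    unfolding set_add_def' using M.I_zero_closed by blast
qed

lemma exists_primeideal_disjoint:
  assumes "submonoid S R" and "\<zero> \<notin> S"
  obtains P where "primeideal P R" "P \<inter> S = {}"
proof -
  interpret S: submonoid S R by fact
  have "{\<zero>} \<inter> S = {}" using assms(2) by blast
  with zeroideal obtain M where M: "ideal M R" "{\<zero>} \<subseteq> M" "M \<inter> S = {}"
    and max: "\<And>J. ideal J R \<Longrightarrow> M \<subseteq> J \<Longrightarrow> J \<inter> S = {} \<Longrightarrow> J = M"
    by (rule exists_maximal_ideal_disjoint) blast
  interpret M: ideal M R by fact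
  have meets: "\<exists>m\<in>M. \<exists>r\<in>carrier R. m \<oplus> r \<otimes> x \<in> S" if "x \<in> carrier R" "x \<notin> M" for x
  proof -
    have "(M <+>\<^bsub>R\<^esub> PIdl x) \<inter> S \<noteq> {}"
      using max ideal_add_PIdl[OF M(1) that(1)] that(2) by blast
    then show ?thesis unfolding set_add_def' cgenideal_def by blast
  qed
  have "primeideal M R"
  proof (rule primeidealI[OF M(1) is_cring])
    show "carrier R \<noteq> M" using M(3) S.one_closed by blast
  next
    fix a b assume ab: "a \<in> carrier R" "b \<in> carrier R" "a \<otimes> b \<in> M"
    show "a \<in> M \<or> b \<in> M"
    proof (rule ccontr)
      assume "\<not> (a \<in> M \<or> b \<in> M)"
      then obtain m1 r1 m2 r2 where m: "m1 \<in> M" "m2 \<in> M" "r1 \<in> carrier R" "r2 \<in> carrier R"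
        and s: "m1 \<oplus> r1 \<otimes> a \<in> S" "m2 \<oplus> r2 \<otimes> b \<in> S"
        using meets[OF ab(1)] meets[OF ab(2)] by blast
      have "(m1 \<oplus> r1 \<otimes> a) \<otimes> (m2 \<oplus> r2 \<otimes> b)
          = m1 \<otimes> (m2 \<oplus> r2 \<otimes> b) \<oplus> (r1 \<otimes> a \<otimes> m2 \<oplus> (r1 \<otimes> r2) \<otimes> (a \<otimes> b))"
        using m ab M.Icarr by algebra
      also have "\<dots> \<in> M"
        using m ab M.Icarr
        by (intro M.I_add_closed M.I_r_closed[OF m(1)] M.I_l_closed[OF m(2)] M.I_l_closed[OF ab(3)]) auto
      finally show False using s M(3) by blast
    qed
  qed
  then show thesis using that M(3) by blast
qed

lemma exists_maximalideal_superset: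
  assumes "ideal I R" and "\<one> \<notin> I"
  obtains M where "maximalideal M R" "I \<subseteq> M"
proof -
  have "I \<inter> {\<one>} = {}" using assms(2) by blast
  with assms(1) obtain M where M: "ideal M R" "I \<subseteq> M" "M \<inter> {\<one>} = {}"
    and max: "\<And>J. ideal J R \<Longrightarrow> M \<subseteq> J \<Longrightarrow> J \<inter> {\<one>} = {} \<Longrightarrow> J = M"
    by (rule exists_maximal_ideal_disjoint) blast
  have "maximalideal M R"
  proof (rule maximalidealI[OF M(1)])
    show "carrier R \<noteq> M" using M(3) by blast
  next
    fix J assume J: "ideal J R" "M \<subseteq> J" "J \<subseteq> carrier R"
    show "J = M \<or> J = carrier R"
    proof (cases "\<one> \<in> J")
      case True
      then show ?thesis using ideal.one_imp_carrier[OF J(1)] by blast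
    next
      case False
      then show ?thesis using max[OF J(1,2)] by blast
    qed
  qed
  then show thesis using that M(2) by blast
qed

lemma annihilator_ideal:
  assumes x: "x \<in> carrier R"
  shows "ideal (annihilator R x) R"
proof (rule idealI[OF ring_axioms])
  show "subgroup (annihilator R x) (add_monoid R)"
  proof
    show "annihilator R x \<subseteq> carrier (add_monoid R)" unfolding annihilator_def by auto
    show "\<one>\<^bsub>add_monoid R\<^esub> \<in> annihilator R x" unfolding annihilator_def using x by auto
  next
    fix a b assume "a \<in> annihilator R x" "b \<in> annihilator R x"
    then show "a \<otimes>\<^bsub>add_monoid R\<^esub> b \<in> annihilator R x"
      unfolding annihilator_def using x by (auto simp: l_distr)
  next
    fix a assume "a \<in> annihilator R x"
    then show "inv\<^bsub>add_monoid R\<^esub> a \<in> annihilator R x"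
      unfolding annihilator_def using x by (auto simp: l_minus simp flip: a_inv_def)
  qed
next
  fix a b assume "a \<in> annihilator R x" "b \<in> carrier R"
  then show "b \<otimes> a \<in> annihilator R x" "a \<otimes> b \<in> annihilator R x"
    unfolding annihilator_def using x by (auto simp: m_assoc) (metis m_assoc m_comm r_null)
qed

lemma eq_zero_if_locally_zero:
  assumes "x \<in> carrier R"
    and "\<And>M. maximalideal M R \<Longrightarrow> \<exists>u\<in>carrier R - M. u \<otimes> x = \<zero>"
  shows "x = \<zero>"
proof (rule ccontr)
  assume "x \<noteq> \<zero>"
  then have "\<one> \<notin> annihilator R x" using assms(1) by (simp add: annihilator_def)
  with annihilator_ideal[OF assms(1)]
  obtain M where "maximalideal M R" "annihilator R x \<subseteq> M"
    by (rule exists_maximalideal_superset)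
  then show False using assms(2) by (auto simp: annihilator_def)
qed

end

section \<open>Minimal prime ideals and the nilradical\<close>

context cring
begin

lemma min_primes_primeideal: "Q \<in> min_primes R \<Longrightarrow> primeideal Q R"
  unfolding min_primes_def by blast

lemma Inter_chain_primeideal:
  assumes "D \<noteq> {}" and "\<And>Q. Q \<in> D \<Longrightarrow> primeideal Q R"
    and "\<And>Q Q'. Q \<in> D \<Longrightarrow> Q' \<in> D \<Longrightarrow> Q \<subseteq> Q' \<or> Q' \<subseteq> Q"
  shows "primeideal (\<Inter>D) R"
proof (rule primeidealI[OF i_Intersect is_cring])
  show "\<And>I. I \<in> D \<Longrightarrow> ideal I R" using assms(2) primeideal.axioms(1) by blast
  show "D \<noteq> {}" by fact
  then show "carrier R \<noteq> \<Inter>D" using assms(2) primeideal.one_notin by fastforce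
next
  fix a b assume ab: "a \<in> carrier R" "b \<in> carrier R" "a \<otimes> b \<in> \<Inter>D"
  show "a \<in> \<Inter>D \<or> b \<in> \<Inter>D"
  proof (rule ccontr)
    assume "\<not> (a \<in> \<Inter>D \<or> b \<in> \<Inter>D)"
    then obtain Q Q' where "Q \<in> D" "a \<notin> Q" "Q' \<in> D" "b \<notin> Q'" by blast
    moreover have "a \<in> Q \<or> b \<in> Q" "a \<in> Q' \<or> b \<in> Q'"
      using primeideal.I_prime[OF assms(2) ab(1,2)] ab(3) calculation by blast+
    ultimately show False using assms(3) by blast
  qed
qed

lemma exists_min_prime_below:
  assumes "primeideal P R"
  obtains Q where "Q \<in> min_primes R" "Q \<subseteq> P"
proof -
  let ?A = "{Q. primeideal Q R \<and> Q \<subseteq> P}"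
  let ?r = "relation_of (\<lambda>Q Q'. Q' \<subseteq> Q) ?A"
  have "\<exists>Q\<in>?A. \<forall>Q'\<in>?A. Q' \<subseteq> Q \<longrightarrow> Q' = Q"
  proof (rule predicate_Zorn)
    show "partial_order_on ?A ?r"
      by (rule partial_order_on_relation_ofI) auto
  next
    fix C assume C: "C \<in> Chains ?r"
    have "C \<subseteq> ?A" using Chains_relation_of[OF C] .
    have chain: "Q \<subseteq> Q' \<or> Q' \<subseteq> Q" if "Q \<in> C" "Q' \<in> C" for Q Q'
      using C that by (auto simp: Chains_def relation_of_def)
    show "\<exists>Q\<in>?A. \<forall>Q'\<in>C. Q \<subseteq> Q'"
    proof (cases "C = {}")
      case True
      then show ?thesis using assms by blast
    next
      case False
      have "primeideal (\<Inter>C) R"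
        using Inter_chain_primeideal[OF False] \<open>C \<subseteq> ?A\<close> chain by blast
      moreover have "\<Inter>C \<subseteq> P" using False \<open>C \<subseteq> ?A\<close> by blast
      ultimately show ?thesis by blast
    qed
  qed
  then obtain Q where Q: "Q \<in> ?A" and min: "\<forall>Q'\<in>?A. Q' \<subseteq> Q \<longrightarrow> Q' = Q" ..
  then have "Q \<in> min_primes R" unfolding min_primes_def by blast
  then show thesis using Q that by blast
qed

lemma exists_min_prime_disjoint:
  assumes "submonoid S R" and "\<zero> \<notin> S"
  obtains Q where "Q \<in> min_primes R" "Q \<inter> S = {}"
proof -
  obtain P where "primeideal P R" "P \<inter> S = {}"
    using assms by (rule exists_primeideal_disjoint)
  moreover obtain Q where "Q \<in> min_primes R" "Q \<subseteq> P"
    using calculation(1) by (rule exists_min_prime_below)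
  ultimately show thesis using that by blast
qed

lemma min_prime_mem_imp_killed_pow:
  assumes Q: "Q \<in> min_primes R" and "x \<in> Q"
  obtains s k where "s \<in> carrier R - Q" "s \<otimes> x [^] (k::nat) = \<zero>"
proof -
  interpret Q: primeideal Q R using min_primes_primeideal[OF Q] .
  have x: "x \<in> carrier R" using Q.Icarr[OF assms(2)] .
  let ?S = "{s \<otimes> x [^] (k::nat) | s k. s \<in> carrier R - Q}"
  have "\<zero> \<in> ?S"
  proof (rule ccontr)
    assume "\<zero> \<notin> ?S"
    moreover have "submonoid ?S R"
    proof
      show "?S \<subseteq> carrier R" using x by auto
      show "\<one> \<in> ?S" using Q.one_notin by (intro CollectI exI[of _ \<one>] exI[of _ 0]) auto
    next
      fix a b assume "a \<in> ?S" "b \<in> ?S"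
      then obtain s k t l where st: "s \<in> carrier R - Q" "t \<in> carrier R - Q"
        and "a = s \<otimes> x [^] (k::nat)" "b = t \<otimes> x [^] (l::nat)" by blast
      then have "a \<otimes> b = (s \<otimes> t) \<otimes> x [^] (k + l)"
        using x by (simp add: nat_pow_mult[symmetric] m_ac)
      then show "a \<otimes> b \<in> ?S" using Q.compl_mult_closed[OF st] by blast
    qed
    ultimately obtain P where P: "primeideal P R" "P \<inter> ?S = {}"
      using exists_primeideal_disjoint by blast
    have "carrier R - Q \<subseteq> ?S" by (force intro: exI[of _ 0])
    then have "P \<subseteq> Q" using P ideal.Icarr[OF primeideal.axioms(1)[OF P(1)]] by blast
    then have "P = Q" using Q P(1) unfolding min_primes_def by blast
    moreover have "x \<in> ?S" using x Q.one_notin by (intro CollectI exI[of _ \<one>] exI[of _ 1]) auto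
    ultimately show False using P(2) assms(2) by blast
  qed
  then show thesis using that by auto
qed

lemma nilradical_iff_min_primes:
  "x \<in> nilradical R \<longleftrightarrow> x \<in> carrier R \<and> (\<forall>Q\<in>min_primes R. x \<in> Q)"
proof (intro iffI conjI ballI; (elim conjE)?)
  show "x \<in> nilradical R \<Longrightarrow> x \<in> carrier R" by (simp add: nilradical_def)
  show "x \<in> Q" if "x \<in> nilradical R" "Q \<in> min_primes R" for Q
    using that primeideal.nilpotent_mem[OF min_primes_primeideal] by (simp add: nilradical_def)
next
  assume x: "x \<in> carrier R" and "\<forall>Q\<in>min_primes R. x \<in> Q"
  show "x \<in> nilradical R"
  proof (rule ccontr)
    let ?S = "{x [^] (k::nat) | k. True}"
    assume "x \<notin> nilradical R"
    then have "\<zero> \<notin> ?S" using x by (auto simp: nilradical_def nilpotent_el_def)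
    moreover have "submonoid ?S R"
      using x by unfold_locales (auto simp: nat_pow_mult intro: exI[of _ 0])
    ultimately obtain Q where "Q \<in> min_primes R" "Q \<inter> ?S = {}"
      using exists_min_prime_disjoint by blast
    moreover have "x \<in> ?S" using x by (intro CollectI exI[of _ 1]) simp
    ultimately show False using \<open>\<forall>Q\<in>min_primes R. x \<in> Q\<close> by blast
  qed
qed

lemma nilradical_ideal: "ideal (nilradical R) R"
proof -
  have "nilradical R = \<Inter>(insert (carrier R) (min_primes R))"
    by (auto simp: nilradical_iff_min_primes)
  moreover have "ideal (\<Inter>(insert (carrier R) (min_primes R))) R"
    by (rule i_Intersect) (auto intro: oneideal primeideal.axioms(1) min_primes_primeideal)
  ultimately show ?thesis by simp
qed

lemma mem_nilradical_iff: "x \<in> nilradical R \<longleftrightarrow> nilpotent_el R x"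
  unfolding nilradical_def nilpotent_el_def by auto

lemma nilradical_pow_eventually_zero:
  assumes "x \<in> nilradical R"
  shows "\<exists>i. \<forall>k\<ge>i. x [^] (k::nat) = \<zero>"
proof -
  obtain i :: nat where x: "x \<in> carrier R" "x [^] i = \<zero>"
    using assms unfolding mem_nilradical_iff nilpotent_el_def by blast
  have "x [^] k = \<zero>" if "i \<le> k" for k :: nat
  proof -
    have "x [^] k = x [^] i \<otimes> x [^] (k - i)" using that x(1) by (simp add: nat_pow_mult)
    then show ?thesis using x by simp
  qed
  then show ?thesis by blast
qed

lemma mult_pow_mem_nilradical:
  assumes "x \<in> carrier R" "y \<in> carrier R" "x \<otimes> y [^] (k::nat) \<in> nilradical R"
  shows "x \<otimes> y \<in> nilradical R"
  unfolding nilradical_iff_min_primes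
proof (intro conjI ballI)
  show "x \<otimes> y \<in> carrier R" using assms by simp
  fix Q assume "Q \<in> min_primes R"
  then interpret Q: primeideal Q R by (rule min_primes_primeideal)
  have "x \<otimes> y [^] k \<in> Q" using assms(3) \<open>Q \<in> min_primes R\<close> nilradical_iff_min_primes by blast
  then have "x \<in> Q \<or> y \<in> Q" using Q.I_prime assms(1,2) Q.pow_mem_imp_mem by blast
  then show "x \<otimes> y \<in> Q" using Q.I_l_closed Q.I_r_closed assms(1,2) by blast
qed

lemma idempotent_mult_nilradical:
  assumes "u \<in> carrier R" "d \<in> carrier R" "d \<otimes> d = d" and "u \<otimes> d \<in> nilradical R"
  shows "\<exists>l. u [^] (l::nat) \<otimes> d = \<zero>"
proof -
  obtain l where l: "(u \<otimes> d) [^] Suc l = \<zero>"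
    using nilradical_pow_eventually_zero[OF assms(4)] by (meson le_SucI order_refl)
  have dpow: "d [^] Suc k = d" for k :: nat
    by (induction k) (use assms(2,3) in simp_all)
  have "u [^] Suc l \<otimes> d = u [^] Suc l \<otimes> d [^] Suc l" by (simp only: dpow)
  also have "\<dots> = (u \<otimes> d) [^] Suc l" using assms(1,2) by (rule nat_pow_distrib[symmetric])
  also note l
  finally show ?thesis by blast
qed

end

section \<open>Annihilators and principal ideals\<close>

context cring
begin

lemma annihilator_subset_iff:
  "annihilator R f \<subseteq> annihilator R e \<longleftrightarrow> (\<forall>a\<in>carrier R. a \<otimes> f = \<zero> \<longrightarrow> a \<otimes> e = \<zero>)"
  by (auto simp: annihilator_def)

lemma annihilator_subset_mult:
  "x \<in> carrier R \<Longrightarrow> y \<in> carrier R \<Longrightarrow> annihilator R x \<subseteq> annihilator R (x \<otimes> y)"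
  by (auto simp: annihilator_def m_assoc[symmetric])

lemma one_minus_mult_eq_zero_iff:
  assumes "e \<in> carrier R" "g \<in> carrier R"
  shows "(\<one> \<ominus> e) \<otimes> g = \<zero> \<longleftrightarrow> e \<otimes> g = g"
proof -
  have "(\<one> \<ominus> e) \<otimes> g = g \<ominus> e \<otimes> g" using assms by algebra
  then show ?thesis using assms r_right_minus_eq[of g "e \<otimes> g"] by auto
qed

lemma idempotent_if_annihilator_subset:
  assumes e: "e \<in> carrier R" and g: "g \<in> carrier R"
    and "e \<otimes> g = g" and "annihilator R g \<subseteq> annihilator R e"
  shows "e \<otimes> e = e"
proof -
  have "\<one> \<ominus> e \<in> annihilator R g"
    using one_minus_mult_eq_zero_iff[OF e g] assms(3) e by (simp add: annihilator_def)
  then have "(\<one> \<ominus> e) \<otimes> e = \<zero>" using assms(4) by (auto simp: annihilator_def)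
  moreover have "(\<one> \<ominus> e) \<otimes> e = e \<ominus> e \<otimes> e" using e by algebra
  ultimately show ?thesis using e by simp
qed

lemma annihilator_pow_subset:
  assumes e: "e \<in> carrier R" "e \<otimes> e = e" and g: "g \<in> carrier R"
    and ann: "annihilator R g \<subseteq> annihilator R e"
  shows "annihilator R (g [^] (m::nat)) \<subseteq> annihilator R e"
proof (induction m)
  case 0
  show ?case using e(1) by (auto simp: annihilator_def)
next
  case (Suc m)
  show ?case unfolding annihilator_subset_iff
  proof (intro ballI impI)
    fix a assume a: "a \<in> carrier R" "a \<otimes> g [^] Suc m = \<zero>"
    then have "(a \<otimes> g [^] m) \<otimes> g = \<zero>" using g by (simp add: m_assoc)
    moreover have "a \<otimes> g [^] m \<in> carrier R" using a(1) g by simp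
    ultimately have "(a \<otimes> g [^] m) \<otimes> e = \<zero>" using ann unfolding annihilator_subset_iff by blast
    then have "(a \<otimes> e) \<otimes> g [^] m = \<zero>" using a(1) e(1) g by (simp add: m_ac)
    moreover have "a \<otimes> e \<in> carrier R" using a(1) e(1) by simp
    ultimately have "(a \<otimes> e) \<otimes> e = \<zero>" using Suc.IH unfolding annihilator_subset_iff by blast
    then show "a \<otimes> e = \<zero>" using a(1) e by (simp add: m_assoc)
  qed
qed

lemma finsum_singleton: "h i \<in> carrier R \<Longrightarrow> finsum R h {i} = h i"
  using finsum_insert[of "{}" i h] by simp

lemma finsum_singleton_support:
  assumes "h i \<in> carrier R" "g \<in> carrier R"
  shows "finsum R (\<lambda>x. h x \<otimes> g) {x \<in> {i}. h x \<noteq> \<zero>} = h i \<otimes> g"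
proof (cases "h i = \<zero>")
  case True
  then have E: "{x \<in> {i}. h x \<noteq> \<zero>} = {}" by auto
  show ?thesis unfolding E using True assms(2) by simp
next
  case False
  then have E: "{x \<in> {i}. h x \<noteq> \<zero>} = {i}" by auto
  show ?thesis unfolding E using finsum_singleton[of "\<lambda>x. h x \<otimes> g" i] assms by simp
qed

lemma finsum_mult_assoc:
  assumes "finite A" "c \<in> A \<rightarrow> carrier R" "b \<in> A \<rightarrow> carrier R" "f \<in> carrier R"
  shows "finsum R (\<lambda>i. c i \<otimes> (b i \<otimes> f)) A = finsum R (\<lambda>i. c i \<otimes> b i) A \<otimes> f"
proof -
  have "finsum R (\<lambda>i. c i \<otimes> b i) A \<otimes> f = finsum R (\<lambda>i. c i \<otimes> b i \<otimes> f) A"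
    using assms by (intro finsum_ldistr) auto
  also have "\<dots> = finsum R (\<lambda>i. c i \<otimes> (b i \<otimes> f)) A"
    using assms by (intro finsum_cong') (auto simp: m_assoc Pi_iff)
  finally show ?thesis by simp
qed

lemma PIdl_cofactor:
  obtains c where "\<And>u. u \<in> PIdl f \<Longrightarrow> c u \<in> carrier R" "\<And>u. u \<in> PIdl f \<Longrightarrow> c u \<otimes> f = u"
proof -
  have "\<forall>u\<in>PIdl f. \<exists>y. y \<in> carrier R \<and> y \<otimes> f = u" unfolding cgenideal_def by blast
  then obtain c where "\<forall>u\<in>PIdl f. c u \<in> carrier R \<and> c u \<otimes> f = u" by (rule bchoice[elim_format]) blast
  then show thesis using that by blast
qed

lemma mult_eq_if_annihilator_subset:
  assumes "annihilator R f \<subseteq> annihilator R e" and "f \<in> carrier R" "e \<in> carrier R"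
    and "y \<in> carrier R" "z \<in> carrier R" "y \<otimes> f = z \<otimes> f"
  shows "y \<otimes> e = z \<otimes> e"
proof -
  have "(y \<ominus> z) \<otimes> f = y \<otimes> f \<ominus> z \<otimes> f" using assms(2,4,5) by algebra
  then have "y \<ominus> z \<in> annihilator R e" using assms by (auto simp: annihilator_def)
  moreover have "(y \<ominus> z) \<otimes> e = y \<otimes> e \<ominus> z \<otimes> e" using assms(3-5) by algebra
  ultimately show ?thesis using assms(3-5) by (simp add: annihilator_def)
qed

lemma projective_PIdl_imp:
  assumes f: "f \<in> carrier R" and "projective_ideal R (PIdl f)"
  obtains e where "e \<in> carrier R" "e \<otimes> f = f" "annihilator R f \<subseteq> annihilator R e"
proof -
  obtain Bs :: "'a set" and g :: "'a \<Rightarrow> 'a" and s :: "'a \<Rightarrow> 'a \<Rightarrow> 'a"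
    where g: "\<forall>x\<in>Bs. g x \<in> PIdl f" and sF: "\<forall>u\<in>PIdl f. s u \<in> free_mod R Bs"
    and sM: "\<forall>a\<in>carrier R. \<forall>u\<in>PIdl f. \<forall>x\<in>Bs. s (a \<otimes> u) x = a \<otimes> s u x"
    and sS: "\<forall>u\<in>PIdl f. finsum R (\<lambda>x. s u x \<otimes> g x) {x \<in> Bs. s u x \<noteq> \<zero>} = u"
    using assms(2) unfolding projective_ideal_def by blast
  obtain c where c: "\<And>u. u \<in> PIdl f \<Longrightarrow> c u \<in> carrier R"
    and cf: "\<And>u. u \<in> PIdl f \<Longrightarrow> c u \<otimes> f = u"
    by (rule PIdl_cofactor[of f]) blast
  have fI: "f \<in> PIdl f" using cgenideal_self[OF f] .
  define F where "F = {x \<in> Bs. s f x \<noteq> \<zero>}"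
  have F: "finite F" "F \<subseteq> Bs" using sF fI unfolding F_def free_mod_def by auto
  have sf: "s f x \<in> carrier R" for x using sF fI unfolding free_mod_def by (cases "x \<in> Bs") auto
  have gc: "c (g x) \<in> carrier R" "c (g x) \<otimes> f = g x" if "x \<in> F" for x
    using c cf g F(2) that by blast+
  have gC: "g x \<in> carrier R" if "x \<in> F" for x
    using gc[OF that] f by (metis m_closed)
  \<comment> \<open>\<open>e\<close> is the image of \<open>f\<close> under \<open>PIdl f \<rightarrow> R^(Bs) \<rightarrow> R\<close>, the last map sending the basis vector \<open>x\<close> to \<open>c (g x)\<close>\<close>
  define e where "e = finsum R (\<lambda>x. s f x \<otimes> c (g x)) F"
  have e: "e \<in> carrier R" unfolding e_def using sf gc by (intro finsum_closed) auto
  have "e \<otimes> f = finsum R (\<lambda>x. s f x \<otimes> (c (g x) \<otimes> f)) F"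
    unfolding e_def using F(1) sf gc f by (intro finsum_mult_assoc[symmetric]) auto
  also have "\<dots> = finsum R (\<lambda>x. s f x \<otimes> g x) F"
    using gc gC sf f by (intro finsum_cong') auto
  also have "\<dots> = f" using sS fI unfolding F_def by blast
  finally have ef: "e \<otimes> f = f" .
  have "annihilator R f \<subseteq> annihilator R e"
  proof
    fix a assume "a \<in> annihilator R f"
    then have a: "a \<in> carrier R" "a \<otimes> f = \<zero>" unfolding annihilator_def by auto
    have sa: "a \<otimes> s f x = \<zero>" if "x \<in> F" for x
      using sM[rule_format, OF a(1) fI, of x] sM[rule_format, OF zero_closed fI, of x]
        a(2) f sf F(2) that by auto
    have "a \<otimes> e = finsum R (\<lambda>x. a \<otimes> (s f x \<otimes> c (g x))) F"
      unfolding e_def using F(1) a(1) sf gc by (intro finsum_rdistr) auto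
    also have "\<dots> = finsum R (\<lambda>x. \<zero>) F"
      using a(1) sf gc sa by (intro finsum_cong') (auto simp: m_assoc[symmetric])
    finally show "a \<in> annihilator R e" using a(1) by (simp add: annihilator_def)
  qed
  with e ef show thesis by (rule that)
qed

lemma projective_PIdl_if:
  assumes f: "f \<in> carrier R"
    and e: "e \<in> carrier R" "e \<otimes> f = f" "annihilator R f \<subseteq> annihilator R e"
  shows "projective_ideal R (PIdl f)"
proof -
  obtain c where c: "\<And>u. u \<in> PIdl f \<Longrightarrow> c u \<in> carrier R"
    and cf: "\<And>u. u \<in> PIdl f \<Longrightarrow> c u \<otimes> f = u"
    by (rule PIdl_cofactor[of f]) blast
  \<comment> \<open>the cofactor of \<open>u\<close> is only determined modulo \<open>Ann f\<close>, but multiplying by \<open>e\<close> kills the ambiguity\<close>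
  have ce: "c u \<otimes> e = y \<otimes> e" if y: "y \<in> carrier R" "y \<otimes> f = u" for u y
  proof -
    have u: "u \<in> PIdl f" using y unfolding cgenideal_def by blast
    show ?thesis using mult_eq_if_annihilator_subset[OF e(3) f e(1) c[OF u] y(1)] cf[OF u] y(2) by simp
  qed
  define s where "s u x = (if x = f then c u \<otimes> e else \<zero>)" for u x
  show ?thesis unfolding projective_ideal_def
  proof (intro exI[of _ "{f}"] exI[of _ "\<lambda>x. f"] exI[of _ s] conjI ballI)
    show "f \<in> PIdl f" using cgenideal_self[OF f] .
  next
    fix u assume "u \<in> PIdl f"
    then show "s u \<in> free_mod R {f}" unfolding free_mod_def s_def using c e by auto
  next
    fix u v x assume u: "u \<in> PIdl f" and v: "v \<in> PIdl f"
    have "(c u \<oplus> c v) \<otimes> f = u \<oplus> v" using c cf u v f by (simp add: l_distr)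
    then have "c (u \<oplus> v) \<otimes> e = (c u \<oplus> c v) \<otimes> e" using ce c u v by simp
    then show "s (u \<oplus> v) x = s u x \<oplus> s v x"
      unfolding s_def using c u v e by (simp add: l_distr)
  next
    fix a u x assume a: "a \<in> carrier R" and u: "u \<in> PIdl f"
    have "(a \<otimes> c u) \<otimes> f = a \<otimes> u" using c cf u a f by (simp add: m_assoc)
    then have "c (a \<otimes> u) \<otimes> e = (a \<otimes> c u) \<otimes> e" using ce c u a by simp
    then show "s (a \<otimes> u) x = a \<otimes> s u x"
      unfolding s_def using c u e a by (simp add: m_assoc)
  next
    fix u assume u: "u \<in> PIdl f"
    have "s u f \<in> carrier R" unfolding s_def using c u e by simp
    then have "finsum R (\<lambda>x. s u x \<otimes> f) {x \<in> {f}. s u x \<noteq> \<zero>} = s u f \<otimes> f"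
      using f by (rule finsum_singleton_support)
    also have "\<dots> = u" unfolding s_def using c cf u e f by (simp add: m_assoc)
    finally show "finsum R (\<lambda>x. s u x \<otimes> f) {x \<in> {f}. s u x \<noteq> \<zero>} = u" .
  qed
qed

lemma projective_PIdl_iff:
  assumes "f \<in> carrier R"
  shows "projective_ideal R (PIdl f) \<longleftrightarrow>
    (\<exists>e\<in>carrier R. e \<otimes> f = f \<and> annihilator R f \<subseteq> annihilator R e)"
proof
  assume "projective_ideal R (PIdl f)"
  with assms obtain e where "e \<in> carrier R" "e \<otimes> f = f" "annihilator R f \<subseteq> annihilator R e"
    by (rule projective_PIdl_imp)
  then show "\<exists>e\<in>carrier R. e \<otimes> f = f \<and> annihilator R f \<subseteq> annihilator R e" by blast
qed (use assms projective_PIdl_if in blast)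

lemma flat_PIdl_imp:
  assumes f: "f \<in> carrier R" and "flat_ideal R (PIdl f)" and a: "a \<in> annihilator R f"
  obtains e where "e \<in> carrier R" "e \<otimes> f = f" "a \<otimes> e = \<zero>"
proof -
  have fI: "f \<in> PIdl f" using cgenideal_self[OF f] .
  have ac: "a \<in> carrier R" "a \<otimes> f = \<zero>" using a unfolding annihilator_def by auto
  \<comment> \<open>the equational criterion, applied to the one-term relation \<open>a f = 0\<close>\<close>
  obtain m :: nat and A y where y: "\<forall>j<m. y j \<in> PIdl f" and A: "\<forall>j<m. A 0 j \<in> carrier R"
    and fy: "f = finsum R (\<lambda>j. A 0 j \<otimes> y j) {..<m}"
    and aA: "\<forall>j<m. finsum R (\<lambda>i. a \<otimes> A i j) {..<Suc 0} = \<zero>"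
    using assms(2)[unfolded flat_ideal_def, rule_format, of "Suc 0" "\<lambda>_. a" "\<lambda>_. f"]
      ac fI finsum_singleton[of "\<lambda>_. a \<otimes> f" 0] by auto
  obtain c where c: "\<And>u. u \<in> PIdl f \<Longrightarrow> c u \<in> carrier R"
    and cf: "\<And>u. u \<in> PIdl f \<Longrightarrow> c u \<otimes> f = u"
    by (rule PIdl_cofactor[of f]) blast
  have yC: "y j \<in> carrier R" if "j < m" for j
    using y that ideal.Icarr[OF cgenideal_ideal[OF f]] by blast
  have aA0: "a \<otimes> A 0 j = \<zero>" if "j < m" for j
    using aA that A ac(1) finsum_singleton[of "\<lambda>i. a \<otimes> A i j" 0] by (simp add: lessThan_Suc)
  define e where "e = finsum R (\<lambda>j. A 0 j \<otimes> c (y j)) {..<m}"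
  have e: "e \<in> carrier R" unfolding e_def using A c y by (intro finsum_closed) auto
  have "e \<otimes> f = finsum R (\<lambda>j. A 0 j \<otimes> (c (y j) \<otimes> f)) {..<m}"
    unfolding e_def using A c y f by (intro finsum_mult_assoc[symmetric]) auto
  also have "\<dots> = finsum R (\<lambda>j. A 0 j \<otimes> y j) {..<m}"
    using A c cf y yC by (intro finsum_cong') auto
  also have "\<dots> = f" using fy by simp
  finally have "e \<otimes> f = f" .
  moreover have "a \<otimes> e = finsum R (\<lambda>j. a \<otimes> (A 0 j \<otimes> c (y j))) {..<m}"
    unfolding e_def using A c y ac(1) by (intro finsum_rdistr) auto
  moreover have "\<dots> = finsum R (\<lambda>j. \<zero>) {..<m}"
    using A c y ac(1) aA0 by (intro finsum_cong') (auto simp: m_assoc[symmetric])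
  ultimately show thesis using that e by simp
qed

lemma flat_PIdl_if:
  assumes f: "f \<in> carrier R"
    and H: "\<And>a. a \<in> annihilator R f \<Longrightarrow> \<exists>e\<in>carrier R. e \<otimes> f = f \<and> a \<otimes> e = \<zero>"
  shows "flat_ideal R (PIdl f)"
  unfolding flat_ideal_def
proof (intro allI impI)
  fix n :: nat and r x :: "nat \<Rightarrow> 'a"
  assume rx: "(\<forall>i<n. r i \<in> carrier R \<and> x i \<in> PIdl f) \<and> finsum R (\<lambda>i. r i \<otimes> x i) {..<n} = \<zero>"
  obtain c where c: "\<And>u. u \<in> PIdl f \<Longrightarrow> c u \<in> carrier R"
    and cf: "\<And>u. u \<in> PIdl f \<Longrightarrow> c u \<otimes> f = u"
    by (rule PIdl_cofactor[of f]) blast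
  have r: "r i \<in> carrier R" and cx: "c (x i) \<in> carrier R" "c (x i) \<otimes> f = x i" if "i < n" for i
    using rx c cf that by blast+
  have xC: "x i \<in> carrier R" if "i < n" for i
    using cx[OF that] f by (metis m_closed)
  \<comment> \<open>with \<open>x i = c_i f\<close> the relation reads \<open>a f = 0\<close> for \<open>a = \<Sum> r_i c_i\<close>\<close>
  define a where "a = finsum R (\<lambda>i. r i \<otimes> c (x i)) {..<n}"
  have "a \<otimes> f = finsum R (\<lambda>i. r i \<otimes> (c (x i) \<otimes> f)) {..<n}"
    unfolding a_def using r cx f by (intro finsum_mult_assoc[symmetric]) auto
  also have "\<dots> = finsum R (\<lambda>i. r i \<otimes> x i) {..<n}"
    using r cx xC by (intro finsum_cong') auto
  finally have "a \<in> annihilator R f"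
    unfolding annihilator_def a_def using r cx xC rx by (auto intro: finsum_closed)
  then obtain e where e: "e \<in> carrier R" "e \<otimes> f = f" "a \<otimes> e = \<zero>" using H by blast
  show "\<exists>(m::nat) A y. (\<forall>j<m. y j \<in> PIdl f) \<and> (\<forall>i<n. \<forall>j<m. A i j \<in> carrier R)
          \<and> (\<forall>i<n. x i = finsum R (\<lambda>j. A i j \<otimes> y j) {..<m})
          \<and> (\<forall>j<m. finsum R (\<lambda>i. r i \<otimes> A i j) {..<n} = \<zero>)"
  proof (intro exI[of _ "Suc 0"] exI[of _ "\<lambda>i j. c (x i) \<otimes> e"] exI[of _ "\<lambda>j. f"] conjI allI impI)
    show "f \<in> PIdl f" using cgenideal_self[OF f] .
    show "\<And>i j. i < n \<Longrightarrow> c (x i) \<otimes> e \<in> carrier R" using cx e by auto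
  next
    fix i assume "i < n"
    then show "x i = finsum R (\<lambda>j. c (x i) \<otimes> e \<otimes> f) {..<Suc 0}"
      using cx xC e f by (simp add: m_assoc lessThan_Suc finsum_singleton)
  next
    have "finsum R (\<lambda>i. r i \<otimes> (c (x i) \<otimes> e)) {..<n} = a \<otimes> e"
      unfolding a_def using r cx e by (intro finsum_mult_assoc) auto
    then show "finsum R (\<lambda>i. r i \<otimes> (c (x i) \<otimes> e)) {..<n} = \<zero>" using e by simp
  qed
qed

lemma flat_PIdl_iff:
  assumes "f \<in> carrier R"
  shows "flat_ideal R (PIdl f) \<longleftrightarrow>
    (\<forall>a\<in>annihilator R f. \<exists>e\<in>carrier R. e \<otimes> f = f \<and> a \<otimes> e = \<zero>)"
proof
  assume flat: "flat_ideal R (PIdl f)"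
  show "\<forall>a\<in>annihilator R f. \<exists>e\<in>carrier R. e \<otimes> f = f \<and> a \<otimes> e = \<zero>"
  proof
    fix a assume "a \<in> annihilator R f"
    with assms flat obtain e where "e \<in> carrier R" "e \<otimes> f = f" "a \<otimes> e = \<zero>"
      by (rule flat_PIdl_imp)
    then show "\<exists>e\<in>carrier R. e \<otimes> f = f \<and> a \<otimes> e = \<zero>" by blast
  qed
qed (use assms flat_PIdl_if in blast)

lemma pp_ring_iff:
  "pp_ring R \<longleftrightarrow> (\<forall>f\<in>carrier R. \<exists>e\<in>carrier R. e \<otimes> f = f \<and> annihilator R f \<subseteq> annihilator R e)"
  unfolding pp_ring_def by (simp add: projective_PIdl_iff)

lemma GPP_ring_iff:
  "GPP_ring R \<longleftrightarrow> (\<forall>f\<in>carrier R. \<exists>n\<ge>(1::nat). \<exists>e\<in>carrier R.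
     e \<otimes> f [^] n = f [^] n \<and> annihilator R (f [^] n) \<subseteq> annihilator R e)"
  unfolding GPP_ring_def by (simp add: projective_PIdl_iff)

lemma GPF_ring_iff:
  "GPF_ring R \<longleftrightarrow> (\<forall>f\<in>carrier R. \<exists>n\<ge>(1::nat). \<forall>a\<in>annihilator R (f [^] n).
     \<exists>e\<in>carrier R. e \<otimes> f [^] n = f [^] n \<and> a \<otimes> e = \<zero>)"
  unfolding GPF_ring_def by (simp add: flat_PIdl_iff)

end

section \<open>Localization at a prime ideal\<close>

text \<open>That \<open>R\<^sub>P\<close> is primary, stated inside \<open>R\<close>: whenever \<open>a b = 0\<close>, either \<open>a/1 = 0\<close> or \<open>b/1\<close> is
  nilpotent.\<close>

definition primary_at :: "('a, 'm) ring_scheme \<Rightarrow> 'a set \<Rightarrow> bool" where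
  "primary_at R P \<longleftrightarrow> (\<forall>a\<in>carrier R. \<forall>b\<in>carrier R. a \<otimes>\<^bsub>R\<^esub> b = \<zero>\<^bsub>R\<^esub> \<longrightarrow>
     (\<exists>u\<in>carrier R - P. u \<otimes>\<^bsub>R\<^esub> a = \<zero>\<^bsub>R\<^esub>)
   \<or> (\<exists>u\<in>carrier R - P. \<exists>k::nat. u \<otimes>\<^bsub>R\<^esub> b [^]\<^bsub>R\<^esub> k = \<zero>\<^bsub>R\<^esub>))"

context cring
begin

lemma loc_rel_iff:
  "((a, s), (b, t)) \<in> loc_rel R P \<longleftrightarrow> a \<in> carrier R \<and> b \<in> carrier R
      \<and> s \<in> carrier R - P \<and> t \<in> carrier R - P
      \<and> (\<exists>u\<in>carrier R - P. u \<otimes> (a \<otimes> t \<ominus> b \<otimes> s) = \<zero>)"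
  unfolding loc_rel_def by simp

lemma loc_rel_sym:
  assumes "((a, s), (b, t)) \<in> loc_rel R P"
  shows "((b, t), (a, s)) \<in> loc_rel R P"
proof -
  obtain u where u: "u \<in> carrier R - P" "u \<otimes> (a \<otimes> t \<ominus> b \<otimes> s) = \<zero>"
    and c: "a \<in> carrier R" "b \<in> carrier R" "s \<in> carrier R - P" "t \<in> carrier R - P"
    using assms loc_rel_iff by blast
  have "u \<in> carrier R" "s \<in> carrier R" "t \<in> carrier R" using u(1) c by auto
  then have "u \<otimes> (b \<otimes> s \<ominus> a \<otimes> t) = \<ominus> (u \<otimes> (a \<otimes> t \<ominus> b \<otimes> s))" using c by algebra
  then have "u \<otimes> (b \<otimes> s \<ominus> a \<otimes> t) = \<zero>" using u(2) by simp
  then show ?thesis using u(1) c loc_rel_iff by blast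
qed

lemma loc_rel_trans:
  assumes P: "primeideal P R"
    and ab: "((a, s), (b, t)) \<in> loc_rel R P" and bc: "((b, t), (c, r)) \<in> loc_rel R P"
  shows "((a, s), (c, r)) \<in> loc_rel R P"
proof -
  from ab obtain u where u: "u \<in> carrier R - P" "u \<otimes> (a \<otimes> t \<ominus> b \<otimes> s) = \<zero>"
    and "a \<in> carrier R" "b \<in> carrier R" "s \<in> carrier R - P" "t \<in> carrier R - P"
    using loc_rel_iff by blast
  moreover from bc obtain v where v: "v \<in> carrier R - P" "v \<otimes> (b \<otimes> r \<ominus> c \<otimes> t) = \<zero>"
    and "c \<in> carrier R" "r \<in> carrier R - P"
    using loc_rel_iff by blast
  ultimately have cc: "a \<in> carrier R" "b \<in> carrier R" "c \<in> carrier R"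
      "s \<in> carrier R - P" "t \<in> carrier R - P" "r \<in> carrier R - P" by auto
  have "(u \<otimes> v \<otimes> t) \<otimes> (a \<otimes> r \<ominus> c \<otimes> s)
      = (v \<otimes> r) \<otimes> (u \<otimes> (a \<otimes> t \<ominus> b \<otimes> s)) \<oplus> (u \<otimes> s) \<otimes> (v \<otimes> (b \<otimes> r \<ominus> c \<otimes> t))"
    using cc(1-3) DiffD1[OF cc(4)] DiffD1[OF cc(5)] DiffD1[OF cc(6)]
      DiffD1[OF u(1)] DiffD1[OF v(1)] by algebra
  also have "\<dots> = \<zero>" using u v cc by simp
  finally have "(u \<otimes> v \<otimes> t) \<otimes> (a \<otimes> r \<ominus> c \<otimes> s) = \<zero>" .
  moreover have "u \<otimes> v \<otimes> t \<in> carrier R - P"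
    using primeideal.compl_mult_closed[OF P] u(1) v(1) cc(5) by blast
  ultimately show ?thesis using cc loc_rel_iff by blast
qed

lemma loc_rel_equiv:
  assumes P: "primeideal P R"
  shows "equiv (carrier R \<times> (carrier R - P)) (loc_rel R P)"
proof (rule equivI)
  show "loc_rel R P \<subseteq> (carrier R \<times> (carrier R - P)) \<times> (carrier R \<times> (carrier R - P))"
    unfolding loc_rel_def by auto
  show "refl_on (carrier R \<times> (carrier R - P)) (loc_rel R P)"
  proof (rule refl_onI)
    fix x assume "x \<in> carrier R \<times> (carrier R - P)"
    then obtain a s where x: "x = (a, s)" "a \<in> carrier R" "s \<in> carrier R - P" by blast
    then have "\<one> \<otimes> (a \<otimes> s \<ominus> a \<otimes> s) = \<zero>" by simp
    then show "(x, x) \<in> loc_rel R P" using x primeideal.one_notin[OF P] loc_rel_iff by blast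
  qed
  show "sym (loc_rel R P)" by (rule symI, clarify) (rule loc_rel_sym)
  show "trans (loc_rel R P)" by (rule transI, clarify) (rule loc_rel_trans[OF P])
qed

lemma loc_class_eq_iff:
  assumes "primeideal P R"
    and "a \<in> carrier R" "s \<in> carrier R - P" "b \<in> carrier R" "t \<in> carrier R - P"
  shows "loc_class R P a s = loc_class R P b t \<longleftrightarrow> (\<exists>u\<in>carrier R - P. u \<otimes> (a \<otimes> t \<ominus> b \<otimes> s) = \<zero>)"
  unfolding loc_class_def
  using eq_equiv_class_iff[OF loc_rel_equiv[OF assms(1)], of "(a, s)" "(b, t)"] assms(2-5) loc_rel_iff
  by auto

lemma loc_class_eq_zero_iff:
  assumes P: "primeideal P R" and "a \<in> carrier R" "s \<in> carrier R - P"
  shows "loc_class R P a s = loc_class R P \<zero> \<one> \<longleftrightarrow> (\<exists>u\<in>carrier R - P. u \<otimes> a = \<zero>)"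
proof -
  have "\<one> \<in> carrier R - P" using primeideal.one_notin[OF P] by simp
  moreover have "u \<otimes> (a \<otimes> \<one> \<ominus> \<zero> \<otimes> s) = u \<otimes> a" if "u \<in> carrier R" for u
    using that assms(2) DiffD1[OF assms(3)] by algebra
  ultimately show ?thesis using loc_class_eq_iff[OF P assms(2,3) zero_closed] by auto
qed

lemma loc_rel_mult:
  assumes P: "primeideal P R"
    and "((a, s), (a', s')) \<in> loc_rel R P" and "((b, t), (b', t')) \<in> loc_rel R P"
  shows "((a \<otimes> b, s \<otimes> t), (a' \<otimes> b', s' \<otimes> t')) \<in> loc_rel R P"
proof -
  interpret P: primeideal P R by fact
  from assms(2) obtain u where u: "u \<in> carrier R - P" "u \<otimes> (a \<otimes> s' \<ominus> a' \<otimes> s) = \<zero>"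
    and "a \<in> carrier R" "a' \<in> carrier R" "s \<in> carrier R - P" "s' \<in> carrier R - P"
    using loc_rel_iff by blast
  moreover from assms(3) obtain v where v: "v \<in> carrier R - P" "v \<otimes> (b \<otimes> t' \<ominus> b' \<otimes> t) = \<zero>"
    and "b \<in> carrier R" "b' \<in> carrier R" "t \<in> carrier R - P" "t' \<in> carrier R - P"
    using loc_rel_iff by blast
  ultimately have c: "a \<in> carrier R" "a' \<in> carrier R" "b \<in> carrier R" "b' \<in> carrier R"
      "s \<in> carrier R - P" "s' \<in> carrier R - P" "t \<in> carrier R - P" "t' \<in> carrier R - P"
    by auto
  have "(u \<otimes> v) \<otimes> ((a \<otimes> b) \<otimes> (s' \<otimes> t') \<ominus> (a' \<otimes> b') \<otimes> (s \<otimes> t))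
      = (v \<otimes> b \<otimes> t') \<otimes> (u \<otimes> (a \<otimes> s' \<ominus> a' \<otimes> s)) \<oplus> (u \<otimes> a' \<otimes> s) \<otimes> (v \<otimes> (b \<otimes> t' \<ominus> b' \<otimes> t))"
    using c(1-4) DiffD1[OF c(5)] DiffD1[OF c(6)] DiffD1[OF c(7)] DiffD1[OF c(8)]
      DiffD1[OF u(1)] DiffD1[OF v(1)] by algebra
  also have "\<dots> = \<zero>" using u v c by simp
  finally have "(u \<otimes> v) \<otimes> ((a \<otimes> b) \<otimes> (s' \<otimes> t') \<ominus> (a' \<otimes> b') \<otimes> (s \<otimes> t)) = \<zero>" .
  moreover have "u \<otimes> v \<in> carrier R - P" "s \<otimes> t \<in> carrier R - P" "s' \<otimes> t' \<in> carrier R - P"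
    using P.compl_mult_closed u(1) v(1) c by blast+
  ultimately show ?thesis using c loc_rel_iff by blast
qed

lemma loc_mult_class:
  assumes P: "primeideal P R"
    and c: "a \<in> carrier R" "s \<in> carrier R - P" "b \<in> carrier R" "t \<in> carrier R - P"
  shows "loc_mult R P (loc_class R P a s) (loc_class R P b t) = loc_class R P (a \<otimes> b) (s \<otimes> t)"
proof -
  have E: "equiv (carrier R \<times> (carrier R - P)) (loc_rel R P)" using loc_rel_equiv[OF P] .
  have "loc_class R P (a' \<otimes> b') (s' \<otimes> t') = loc_class R P (a \<otimes> b) (s \<otimes> t)"
    if "(a', s') \<in> loc_class R P a s" "(b', t') \<in> loc_class R P b t" for a' s' b' t'
  proof -
    have "((a \<otimes> b, s \<otimes> t), (a' \<otimes> b', s' \<otimes> t')) \<in> loc_rel R P"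
      using that loc_rel_mult[OF P] unfolding loc_class_def by blast
    then show ?thesis unfolding loc_class_def using equiv_class_eq[OF E] by metis
  qed
  moreover have "(a, s) \<in> loc_class R P a s" "(b, t) \<in> loc_class R P b t"
    unfolding loc_class_def using equiv_class_self[OF E] c by auto
  ultimately show ?thesis unfolding loc_mult_def by blast
qed

lemma localization_carrierE:
  assumes "X \<in> carrier (localization R P)"
  obtains a s where "a \<in> carrier R" "s \<in> carrier R - P" "X = loc_class R P a s"
  using assms unfolding localization_def loc_class_def by (auto elim!: quotientE)

lemma loc_class_closed:
  "a \<in> carrier R \<Longrightarrow> s \<in> carrier R - P \<Longrightarrow> loc_class R P a s \<in> carrier (localization R P)"
  unfolding localization_def loc_class_def by (auto intro!: quotientI)

lemma loc_class_pow:
  assumes P: "primeideal P R" and "a \<in> carrier R" "s \<in> carrier R - P"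
  shows "loc_class R P a s [^]\<^bsub>localization R P\<^esub> (n::nat) = loc_class R P (a [^] n) (s [^] n)"
proof (induction n)
  case 0
  then show ?case by (simp add: nat_pow_def localization_def)
next
  case (Suc n)
  have "loc_class R P a s [^]\<^bsub>localization R P\<^esub> Suc n
      = loc_mult R P (loc_class R P (a [^] n) (s [^] n)) (loc_class R P a s)"
    using Suc by (simp add: nat_pow_def localization_def)
  also have "\<dots> = loc_class R P (a [^] Suc n) (s [^] Suc n)"
    using loc_mult_class[OF P] assms(2,3) primeideal.compl_pow_closed[OF P] by simp
  finally show ?case .
qed

lemma primary_at_if_primary_localization:
  assumes P: "primeideal P R" and "primary_ring (localization R P)"
  shows "primary_at R P"
  unfolding primary_at_def
proof (intro ballI impI)
  let ?L = "localization R P"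
  fix a b assume ab: "a \<in> carrier R" "b \<in> carrier R" "a \<otimes> b = \<zero>"
  have one: "\<one> \<in> carrier R - P" using primeideal.one_notin[OF P] by simp
  have zero: "\<zero>\<^bsub>?L\<^esub> = loc_class R P \<zero> \<one>" by (simp add: localization_def)
  have "loc_class R P a \<one> \<otimes>\<^bsub>?L\<^esub> loc_class R P b \<one> = loc_class R P (a \<otimes> b) (\<one> \<otimes> \<one>)"
    using loc_mult_class[OF P ab(1) one ab(2) one] by (simp add: localization_def)
  then have "loc_class R P a \<one> = \<zero>\<^bsub>?L\<^esub> \<or> nilpotent_el ?L (loc_class R P b \<one>)"
    using assms(2) loc_class_closed ab one zero unfolding primary_ring_def by simp
  then show "(\<exists>u\<in>carrier R - P. u \<otimes> a = \<zero>) \<or> (\<exists>u\<in>carrier R - P. \<exists>k::nat. u \<otimes> b [^] k = \<zero>)"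
  proof
    assume "loc_class R P a \<one> = \<zero>\<^bsub>?L\<^esub>"
    then show ?thesis using loc_class_eq_zero_iff[OF P ab(1) one] zero by simp
  next
    assume "nilpotent_el ?L (loc_class R P b \<one>)"
    then obtain k :: nat where "loc_class R P b \<one> [^]\<^bsub>?L\<^esub> k = \<zero>\<^bsub>?L\<^esub>"
      unfolding nilpotent_el_def by blast
    then have "loc_class R P (b [^] k) \<one> = loc_class R P \<zero> \<one>"
      using loc_class_pow[OF P ab(2) one] zero by simp
    then show ?thesis using loc_class_eq_zero_iff[OF P _ one] ab(2) by auto
  qed
qed

lemma localization_one_neq_zero:
  assumes P: "primeideal P R"
  shows "\<one>\<^bsub>localization R P\<^esub> \<noteq> \<zero>\<^bsub>localization R P\<^esub>"
proof
  have one: "\<one> \<in> carrier R - P" using primeideal.one_notin[OF P] by simp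
  assume "\<one>\<^bsub>localization R P\<^esub> = \<zero>\<^bsub>localization R P\<^esub>"
  then obtain u where "u \<in> carrier R - P" "u \<otimes> \<one> = \<zero>"
    using loc_class_eq_zero_iff[OF P one_closed one] by (auto simp: localization_def)
  then show False using ideal.I_zero_closed[OF primeideal.axioms(1)[OF P]] by auto
qed

lemma primary_localization_if_primary_at:
  assumes P: "primeideal P R" and H: "primary_at R P"
  shows "primary_ring (localization R P)"
  unfolding primary_ring_def
proof (intro conjI ballI impI)
  interpret P: primeideal P R by fact
  let ?L = "localization R P"
  show "\<one>\<^bsub>?L\<^esub> \<noteq> \<zero>\<^bsub>?L\<^esub>" using localization_one_neq_zero[OF P] .
  have zero: "\<zero>\<^bsub>?L\<^esub> = loc_class R P \<zero> \<one>" by (simp add: localization_def)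
  fix A B assume AB: "A \<in> carrier ?L" "B \<in> carrier ?L" "A \<otimes>\<^bsub>?L\<^esub> B = \<zero>\<^bsub>?L\<^esub>"
  obtain a s where as: "a \<in> carrier R" "s \<in> carrier R - P" "A = loc_class R P a s"
    using AB(1) by (rule localization_carrierE)
  obtain b t where bt: "b \<in> carrier R" "t \<in> carrier R - P" "B = loc_class R P b t"
    using AB(2) by (rule localization_carrierE)
  have "loc_class R P (a \<otimes> b) (s \<otimes> t) = loc_class R P \<zero> \<one>"
    using AB(3) loc_mult_class[OF P as(1,2) bt(1,2)] as(3) bt(3) zero by (simp add: localization_def)
  then obtain u where u: "u \<in> carrier R - P" "(u \<otimes> a) \<otimes> b = \<zero>"
    using loc_class_eq_zero_iff[OF P _ P.compl_mult_closed[OF as(2) bt(2)]] as bt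
    by (auto simp: m_assoc)
  then have "(\<exists>v\<in>carrier R - P. v \<otimes> (u \<otimes> a) = \<zero>) \<or> (\<exists>v\<in>carrier R - P. \<exists>k::nat. v \<otimes> b [^] k = \<zero>)"
    using H as(1) bt(1) unfolding primary_at_def by blast
  then show "A = \<zero>\<^bsub>?L\<^esub> \<or> nilpotent_el ?L B"
  proof
    assume "\<exists>v\<in>carrier R - P. v \<otimes> (u \<otimes> a) = \<zero>"
    then obtain v where v: "v \<in> carrier R - P" "(v \<otimes> u) \<otimes> a = \<zero>"
      using u(1) as(1) by (auto simp: m_assoc)
    then have "A = loc_class R P \<zero> \<one>"
      using loc_class_eq_zero_iff[OF P as(1,2)] as(3) P.compl_mult_closed[OF v(1) u(1)] by blast
    then show ?thesis using zero by simp
  next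
    assume "\<exists>v\<in>carrier R - P. \<exists>k::nat. v \<otimes> b [^] k = \<zero>"
    then obtain v k where v: "v \<in> carrier R - P" "v \<otimes> b [^] (k::nat) = \<zero>" by blast
    have "B [^]\<^bsub>?L\<^esub> k = loc_class R P (b [^] k) (t [^] k)"
      using loc_class_pow[OF P bt(1,2)] bt(3) by simp
    also have "\<dots> = \<zero>\<^bsub>?L\<^esub>"
      using loc_class_eq_zero_iff[OF P _ P.compl_pow_closed[OF bt(2)]] bt(1) v zero by auto
    finally show ?thesis unfolding nilpotent_el_def using AB(2) by blast
  qed
qed

lemma primary_localization_iff:
  "primeideal P R \<Longrightarrow> primary_ring (localization R P) \<longleftrightarrow> primary_at R P"
  using primary_at_if_primary_localization primary_localization_if_primary_at by blast

end

section \<open>Indicators of \<open>D(f)\<close> on \<open>Min(R)\<close>\<close>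

text \<open>Modulo every minimal prime, \<open>e\<close> is \<open>0\<close> on \<open>V(f)\<close> and \<open>1\<close> on \<open>D(f)\<close>: it is an indicator
  function of \<open>D(f) \<inter> Min(R)\<close>.\<close>

definition min_indicator :: "('a, 'm) ring_scheme \<Rightarrow> 'a \<Rightarrow> 'a \<Rightarrow> bool" where
  "min_indicator R f e \<longleftrightarrow>
     (\<forall>Q\<in>min_primes R. (f \<in> Q \<longrightarrow> e \<in> Q) \<and> (f \<notin> Q \<longrightarrow> \<one>\<^bsub>R\<^esub> \<ominus>\<^bsub>R\<^esub> e \<in> Q))"

context cring
begin

lemma min_indicator_if_projective_pow:
  assumes f: "f \<in> carrier R" and n: "(n::nat) \<ge> 1"
    and e: "e \<in> carrier R" "e \<otimes> f [^] n = f [^] n" "annihilator R (f [^] n) \<subseteq> annihilator R e"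
  shows "min_indicator R f e"
  unfolding min_indicator_def
proof (intro ballI conjI impI)
  fix Q assume Q: "Q \<in> min_primes R" and "f \<in> Q"
  interpret Q: primeideal Q R using min_primes_primeideal[OF Q] .
  obtain s k where s: "s \<in> carrier R - Q" "s \<otimes> f [^] (k::nat) = \<zero>"
    using Q \<open>f \<in> Q\<close> by (rule min_prime_mem_imp_killed_pow)
  have idem: "e \<otimes> e = e"
    using idempotent_if_annihilator_subset[OF e(1) nat_pow_closed[OF f] e(2,3)] .
  \<comment> \<open>as \<open>e\<close> is idempotent, \<open>Ann(f\<^sup>n) \<subseteq> Ann e\<close> propagates to \<open>Ann(f\<^sup>k) \<subseteq> Ann(f\<^sup>n\<^sup>k) \<subseteq> Ann e\<close>\<close>
  have "k + (n * k - k) = n * k" using n by simp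
  then have "(f [^] n) [^] k = f [^] k \<otimes> f [^] (n * k - k)"
    using f by (simp only: nat_pow_pow[OF f] nat_pow_mult[OF f])
  then have "annihilator R (f [^] k) \<subseteq> annihilator R ((f [^] n) [^] k)"
    using annihilator_subset_mult[OF nat_pow_closed[OF f] nat_pow_closed[OF f]] by (simp only:)
  also have "\<dots> \<subseteq> annihilator R e"
    using annihilator_pow_subset[OF e(1) idem nat_pow_closed[OF f] e(3)] .
  finally have "s \<otimes> e = \<zero>" using s by (auto simp: annihilator_def)
  then have "s \<otimes> e \<in> Q" using Q.I_zero_closed by simp
  then show "e \<in> Q" using Q.I_prime[of s e] s(1) e(1) by blast
next
  fix Q assume Q: "Q \<in> min_primes R" and "f \<notin> Q"
  interpret Q: primeideal Q R using min_primes_primeideal[OF Q] .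
  have "(\<one> \<ominus> e) \<otimes> f [^] n = \<zero>"
    using one_minus_mult_eq_zero_iff[OF e(1) nat_pow_closed[OF f]] e(2) by simp
  then have "(\<one> \<ominus> e) \<otimes> f [^] n \<in> Q" using Q.I_zero_closed by simp
  moreover have "f [^] n \<notin> Q" using Q.pow_mem_imp_mem[OF f] \<open>f \<notin> Q\<close> by blast
  moreover have "\<one> \<ominus> e \<in> carrier R" using e(1) by simp
  ultimately show "\<one> \<ominus> e \<in> Q" using Q.I_prime[OF _ nat_pow_closed[OF f]] by blast
qed

lemma submonoid_finitely_covered:
  "submonoid {t \<in> carrier R. \<exists>\<F>\<subseteq>\<U>. finite \<F> \<and> (\<forall>Q\<in>min_primes R. t \<in> Q \<longrightarrow> Q \<in> \<Union>\<F>)} R"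
  (is "submonoid ?T R")
proof
  show "?T \<subseteq> carrier R" by auto
  have "\<forall>Q\<in>min_primes R. \<one> \<in> Q \<longrightarrow> Q \<in> \<Union>{}"
    using primeideal.one_notin[OF min_primes_primeideal] by blast
  then show "\<one> \<in> ?T" by (intro CollectI conjI one_closed exI[of _ "{}"]) simp_all
next
  fix a b assume "a \<in> ?T" "b \<in> ?T"
  then obtain \<F>\<^sub>a \<F>\<^sub>b where ab: "a \<in> carrier R" "b \<in> carrier R"
    and F: "\<F>\<^sub>a \<subseteq> \<U>" "finite \<F>\<^sub>a" "\<forall>Q\<in>min_primes R. a \<in> Q \<longrightarrow> Q \<in> \<Union>\<F>\<^sub>a"
      "\<F>\<^sub>b \<subseteq> \<U>" "finite \<F>\<^sub>b" "\<forall>Q\<in>min_primes R. b \<in> Q \<longrightarrow> Q \<in> \<Union>\<F>\<^sub>b"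
    by (elim CollectE conjE exE) (intro that)
  have "Q \<in> \<Union>(\<F>\<^sub>a \<union> \<F>\<^sub>b)" if Q: "Q \<in> min_primes R" "a \<otimes> b \<in> Q" for Q
  proof -
    have "a \<in> Q \<or> b \<in> Q" using primeideal.I_prime[OF min_primes_primeideal[OF Q(1)] ab Q(2)] .
    then show ?thesis using F(3,6) Q(1) by blast
  qed
  then show "a \<otimes> b \<in> ?T"
    using ab F by (intro CollectI conjI m_closed exI[of _ "\<F>\<^sub>a \<union> \<F>\<^sub>b"]) auto
qed

lemma min_quasi_compact_if_min_indicators:
  assumes ind: "\<And>f. f \<in> carrier R \<Longrightarrow> \<exists>e\<in>carrier R. min_indicator R f e"
  shows "min_quasi_compact R"
  unfolding min_quasi_compact_def
proof (intro allI impI, elim conjE)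
  fix \<U> assume opn: "\<forall>U\<in>\<U>. zariski_open R U" and cover: "min_primes R \<subseteq> \<Union>\<U>"
  define T where "T = {t \<in> carrier R. \<exists>\<F>\<subseteq>\<U>. finite \<F> \<and> (\<forall>Q\<in>min_primes R. t \<in> Q \<longrightarrow> Q \<in> \<Union>\<F>)}"
  have "\<zero> \<in> T"
  proof (rule ccontr)
    assume "\<zero> \<notin> T"
    with submonoid_finitely_covered[of \<U>] obtain Q where Q: "Q \<in> min_primes R" "Q \<inter> T = {}"
      unfolding T_def by (rule exists_min_prime_disjoint)
    obtain U where U: "U \<in> \<U>" "Q \<in> U" using cover Q(1) by blast
    then have "zariski_open R U" using opn by blast
    then obtain S where S: "S \<subseteq> carrier R" "U = {P. primeideal P R \<and> \<not> S \<subseteq> P}"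
      unfolding zariski_open_def by blast
    then obtain x where x: "x \<in> S" "x \<notin> Q" using U(2) by blast
    obtain e where e: "e \<in> carrier R" "min_indicator R x e" using ind S(1) x(1) by blast
    \<comment> \<open>the zero locus of \<open>1 - e\<close> in \<open>Min(R)\<close> is \<open>D(x) \<inter> Min(R) \<subseteq> U\<close>\<close>
    have "Q' \<in> U" if Q': "Q' \<in> min_primes R" "\<one> \<ominus> e \<in> Q'" for Q'
    proof -
      have "x \<notin> Q'"
        using e(2) Q' primeideal.one_minus_notin[OF min_primes_primeideal[OF Q'(1)]]
        unfolding min_indicator_def by blast
      then show ?thesis using S x(1) min_primes_primeideal[OF Q'(1)] by blast
    qed
    then have "\<one> \<ominus> e \<in> T" unfolding T_def using e(1) U(1) by (intro CollectI conjI exI[of _ "{U}"]) auto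
    moreover have "\<one> \<ominus> e \<in> Q" using e(2) Q(1) x(2) unfolding min_indicator_def by blast
    ultimately show False using Q(2) by blast
  qed
  then obtain \<F> where "\<F> \<subseteq> \<U>" "finite \<F>" "\<forall>Q\<in>min_primes R. \<zero> \<in> Q \<longrightarrow> Q \<in> \<Union>\<F>"
    unfolding T_def by blast
  moreover have "\<zero> \<in> Q" if "Q \<in> min_primes R" for Q
    using ideal.I_zero_closed[OF primeideal.axioms(1)[OF min_primes_primeideal[OF that]]] .
  ultimately show "\<exists>\<F>\<subseteq>\<U>. finite \<F> \<and> min_primes R \<subseteq> \<Union>\<F>" by blast
qed

lemma min_quasi_compact_finite_cover:
  assumes QC: "min_quasi_compact R" and X: "X \<subseteq> carrier R"
    and cover: "\<forall>Q\<in>min_primes R. \<exists>x\<in>X. x \<notin> Q"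
  obtains F where "F \<subseteq> X" "finite F" "\<forall>Q\<in>min_primes R. \<exists>x\<in>F. x \<notin> Q"
proof -
  define D where "D x = {P. primeideal P R \<and> \<not> {x} \<subseteq> P}" for x
  have "\<forall>U\<in>D ` X. zariski_open R U"
    unfolding zariski_open_def D_def using X by blast
  moreover have "min_primes R \<subseteq> \<Union>(D ` X)"
  proof
    fix Q assume Q: "Q \<in> min_primes R"
    then obtain x where "x \<in> X" "x \<notin> Q" using cover by blast
    then show "Q \<in> \<Union>(D ` X)" using min_primes_primeideal[OF Q] unfolding D_def by blast
  qed
  ultimately obtain \<V> where \<V>: "\<V> \<subseteq> D ` X" "finite \<V>" "min_primes R \<subseteq> \<Union>\<V>"
    using QC[unfolded min_quasi_compact_def, rule_format, of "D ` X"] by blast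
  then obtain F where F: "F \<subseteq> X" "finite F" "\<V> = D ` F"
    using finite_subset_image[OF \<V>(2) \<V>(1)] by blast
  have "\<exists>x\<in>F. x \<notin> Q" if Q: "Q \<in> min_primes R" for Q
  proof -
    obtain x where "x \<in> F" "Q \<in> D x" using \<V>(3) F(3) Q by blast
    then show ?thesis unfolding D_def by blast
  qed
  with F(1,2) show thesis by (intro that) auto
qed

lemma quasi_pf_separator:
  assumes QP: "quasi_pf_ring R" and f: "f \<in> carrier R"
    and s: "s \<in> carrier R" "s \<otimes> f [^] (k::nat) = \<zero>"
  obtains c where "c \<in> carrier R" "\<And>Q. Q \<in> min_primes R \<Longrightarrow> f \<notin> Q \<Longrightarrow> c \<in> Q"
    "\<And>Q. Q \<in> min_primes R \<Longrightarrow> s \<notin> Q \<Longrightarrow> \<one> \<ominus> c \<in> Q"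
proof -
  have "s \<in> annihilator R (f [^] k)" using s by (simp add: annihilator_def)
  then obtain c where "c \<in> annihilator R (f [^] k)" "nilpotent_el R (s \<otimes> (\<one> \<ominus> c))"
    using QP nat_pow_closed[OF f] unfolding quasi_pf_ring_def quasi_pure_def by blast
  then have c: "c \<in> carrier R" "c \<otimes> f [^] k = \<zero>" "nilpotent_el R (s \<otimes> (\<one> \<ominus> c))"
    by (simp_all add: annihilator_def)
  have "c \<in> Q" if Q: "Q \<in> min_primes R" "f \<notin> Q" for Q
  proof -
    interpret Q: primeideal Q R using min_primes_primeideal[OF Q(1)] .
    have "c \<otimes> f [^] k \<in> Q" using c(2) Q.I_zero_closed by simp
    then show ?thesis using Q.I_prime[OF c(1) nat_pow_closed[OF f]] Q.pow_mem_imp_mem[OF f] Q(2) by blast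
  qed
  moreover have "\<one> \<ominus> c \<in> Q" if Q: "Q \<in> min_primes R" "s \<notin> Q" for Q
  proof -
    interpret Q: primeideal Q R using min_primes_primeideal[OF Q(1)] .
    have "\<one> \<ominus> c \<in> carrier R" using c(1) by simp
    then show ?thesis using Q.nilpotent_mem[OF c(3)] Q.I_prime[OF s(1)] Q(2) by blast
  qed
  ultimately show thesis using that c(1) by blast
qed

lemma quasi_pf_partial_indicator:
  assumes QP: "quasi_pf_ring R" and f: "f \<in> carrier R"
    and "finite G" and "G \<subseteq> {s \<in> carrier R. \<exists>k::nat. s \<otimes> f [^] k = \<zero>}"
  shows "\<exists>e\<in>carrier R. \<forall>Q\<in>min_primes R. (f \<notin> Q \<longrightarrow> \<one> \<ominus> e \<in> Q) \<and> (\<forall>s\<in>G. s \<notin> Q \<longrightarrow> e \<in> Q)"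
  using assms(3,4)
proof (induction G rule: finite_induct)
  case empty
  have "\<one> \<ominus> \<one> \<in> Q" if "Q \<in> min_primes R" for Q
    using ideal.I_zero_closed[OF primeideal.axioms(1)[OF min_primes_primeideal[OF that]]]
    by (simp add: a_minus_def r_neg)
  then show ?case by blast
next
  case (insert s G)
  then have "G \<subseteq> {s \<in> carrier R. \<exists>k::nat. s \<otimes> f [^] k = \<zero>}" by blast
  then obtain e where e: "e \<in> carrier R"
    "\<forall>Q\<in>min_primes R. (f \<notin> Q \<longrightarrow> \<one> \<ominus> e \<in> Q) \<and> (\<forall>s\<in>G. s \<notin> Q \<longrightarrow> e \<in> Q)"
    using insert.IH by blast
  obtain k :: nat where "s \<in> carrier R" "s \<otimes> f [^] k = \<zero>" using insert.prems by blast
  with QP f obtain c where c: "c \<in> carrier R" "\<And>Q. Q \<in> min_primes R \<Longrightarrow> f \<notin> Q \<Longrightarrow> c \<in> Q"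
    "\<And>Q. Q \<in> min_primes R \<Longrightarrow> s \<notin> Q \<Longrightarrow> \<one> \<ominus> c \<in> Q"
    by (rule quasi_pf_separator) blast
  \<comment> \<open>\<open>e (1 - c)\<close> is still \<open>1\<close> on \<open>D(f)\<close> and now also vanishes on \<open>D(s)\<close>\<close>
  have "(f \<notin> Q \<longrightarrow> \<one> \<ominus> e \<otimes> (\<one> \<ominus> c) \<in> Q) \<and> (\<forall>s'\<in>insert s G. s' \<notin> Q \<longrightarrow> e \<otimes> (\<one> \<ominus> c) \<in> Q)"
    if Q: "Q \<in> min_primes R" for Q
  proof (intro conjI impI ballI)
    interpret Q: primeideal Q R using min_primes_primeideal[OF Q] .
    assume "f \<notin> Q"
    then have "\<one> \<ominus> e \<in> Q" "e \<otimes> c \<in> Q" using e Q c(2)[OF Q] Q.I_l_closed by blast+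
    moreover have "\<one> \<ominus> e \<otimes> (\<one> \<ominus> c) = (\<one> \<ominus> e) \<oplus> e \<otimes> c" using e(1) c(1) by algebra
    ultimately show "\<one> \<ominus> e \<otimes> (\<one> \<ominus> c) \<in> Q" using Q.I_add_closed by simp
  next
    interpret Q: primeideal Q R using min_primes_primeideal[OF Q] .
    fix s' assume "s' \<in> insert s G" "s' \<notin> Q"
    then have "\<one> \<ominus> c \<in> Q \<or> e \<in> Q" using c(3)[OF Q] e(2) Q by blast
    then show "e \<otimes> (\<one> \<ominus> c) \<in> Q" using Q.I_l_closed Q.I_r_closed e(1) c(1) by auto
  qed
  moreover have "e \<otimes> (\<one> \<ominus> c) \<in> carrier R" using e(1) c(1) by simp
  ultimately show ?case by blast
qed

lemma min_indicator_if_quasi_pf: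
  assumes QP: "quasi_pf_ring R" and QC: "min_quasi_compact R" and f: "f \<in> carrier R"
  shows "\<exists>e\<in>carrier R. min_indicator R f e"
proof -
  let ?Z = "{s \<in> carrier R. \<exists>k::nat. s \<otimes> f [^] k = \<zero>}"
  have Z: "insert f ?Z \<subseteq> carrier R" using f by blast
  have "\<forall>Q\<in>min_primes R. \<exists>x\<in>insert f ?Z. x \<notin> Q"
  proof
    fix Q assume Q: "Q \<in> min_primes R"
    show "\<exists>x\<in>insert f ?Z. x \<notin> Q"
    proof (cases "f \<in> Q")
      case True
      with Q obtain s k where "s \<in> carrier R - Q" "s \<otimes> f [^] (k::nat) = \<zero>"
        by (rule min_prime_mem_imp_killed_pow)
      then show ?thesis by blast
    qed blast
  qed
  with QC Z obtain F where F: "F \<subseteq> insert f ?Z" "finite F" "\<forall>Q\<in>min_primes R. \<exists>x\<in>F. x \<notin> Q"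
    by (rule min_quasi_compact_finite_cover)
  then have "finite (F - {f})" "F - {f} \<subseteq> ?Z" by auto
  from quasi_pf_partial_indicator[OF QP f this] obtain e where e: "e \<in> carrier R"
    "\<forall>Q\<in>min_primes R. (f \<notin> Q \<longrightarrow> \<one> \<ominus> e \<in> Q) \<and> (\<forall>s\<in>F - {f}. s \<notin> Q \<longrightarrow> e \<in> Q)" ..
  have "e \<in> Q" if Q: "Q \<in> min_primes R" "f \<in> Q" for Q
  proof -
    obtain x where "x \<in> F" "x \<notin> Q" using F(3) Q(1) by blast
    then show ?thesis using e(2) Q by blast
  qed
  then have "min_indicator R f e" unfolding min_indicator_def using e(2) by blast
  then show ?thesis using e(1) by blast
qed

lemma pp_ring_Quot_iff:
  assumes I: "ideal I R"
  shows "pp_ring (R Quot I) \<longleftrightarrow>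
    (\<forall>f\<in>carrier R. \<exists>e\<in>carrier R. e \<otimes> f \<ominus> f \<in> I \<and> (\<forall>a\<in>carrier R. a \<otimes> f \<in> I \<longrightarrow> a \<otimes> e \<in> I))"
proof -
  interpret I: ideal I R by fact
  let ?Q = "R Quot I"
  have Q: "cring ?Q" using I.quotient_is_cring[OF is_cring] .
  have carrier: "carrier ?Q = (\<lambda>x. I +> x) ` carrier R"
    unfolding FactRing_def A_RCOSETS_def' by auto
  have mult: "(I +> x) \<otimes>\<^bsub>?Q\<^esub> (I +> y) = I +> (x \<otimes> y)" if "x \<in> carrier R" "y \<in> carrier R" for x y
    using ring_hom_mult[OF I.rcos_ring_hom that] by simp
  have eq: "I +> x = I +> y \<longleftrightarrow> x \<ominus> y \<in> I" if "x \<in> carrier R" "y \<in> carrier R" for x y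
    using quotient_eq_iff_same_a_r_cos[OF I that] by simp
  have zero: "\<zero>\<^bsub>?Q\<^esub> = I +> \<zero>"
    using a_rcos_zero[OF I I.I_zero_closed] by (simp add: FactRing_def)
  have "pp_ring ?Q \<longleftrightarrow> (\<forall>F\<in>carrier ?Q. \<exists>E\<in>carrier ?Q. E \<otimes>\<^bsub>?Q\<^esub> F = F
      \<and> (\<forall>A\<in>carrier ?Q. A \<otimes>\<^bsub>?Q\<^esub> F = \<zero>\<^bsub>?Q\<^esub> \<longrightarrow> A \<otimes>\<^bsub>?Q\<^esub> E = \<zero>\<^bsub>?Q\<^esub>))"
    by (simp only: cring.pp_ring_iff[OF Q] cring.annihilator_subset_iff[OF Q])
  also have "\<dots> \<longleftrightarrow> (\<forall>f\<in>carrier R. \<exists>e\<in>carrier R. I +> (e \<otimes> f) = I +> f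
      \<and> (\<forall>a\<in>carrier R. I +> (a \<otimes> f) = I +> \<zero> \<longrightarrow> I +> (a \<otimes> e) = I +> \<zero>))"
    unfolding carrier zero by (simp add: mult)
  also have "\<dots> \<longleftrightarrow> (\<forall>f\<in>carrier R. \<exists>e\<in>carrier R. e \<otimes> f \<ominus> f \<in> I
      \<and> (\<forall>a\<in>carrier R. a \<otimes> f \<in> I \<longrightarrow> a \<otimes> e \<in> I))"
    by (simp add: eq a_minus_def)
  finally show ?thesis .
qed

lemma min_indicator_mem:
  assumes ind: "min_indicator R f e" and Q: "Q \<in> min_primes R" and f: "f \<in> carrier R"
    and e: "e \<in> carrier R"
  shows "e \<otimes> f \<ominus> f \<in> Q" and "a \<in> carrier R \<Longrightarrow> a \<otimes> f \<in> Q \<Longrightarrow> a \<otimes> e \<in> Q"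
proof -
  interpret Q: primeideal Q R using min_primes_primeideal[OF Q] .
  show "e \<otimes> f \<ominus> f \<in> Q"
  proof (cases "f \<in> Q")
    case True
    then show ?thesis using Q.I_l_closed Q.I_minus_closed e by blast
  next
    case False
    then have "\<one> \<ominus> e \<in> Q" using ind Q unfolding min_indicator_def by blast
    moreover have "e \<otimes> f \<ominus> f = \<zero> \<ominus> (\<one> \<ominus> e) \<otimes> f" using e f by algebra
    ultimately show ?thesis using Q.I_minus_closed Q.I_zero_closed Q.I_r_closed f by simp
  qed
  assume a: "a \<in> carrier R" "a \<otimes> f \<in> Q"
  show "a \<otimes> e \<in> Q"
  proof (cases "f \<in> Q")
    case True
    then show ?thesis using ind Q a(1) Q.I_l_closed unfolding min_indicator_def by blast
  next
    case False
    then show ?thesis using Q.I_prime a f Q.I_r_closed e by blast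
  qed
qed

lemma pp_Quot_nilradical_if_min_indicators:
  assumes ind: "\<And>f. f \<in> carrier R \<Longrightarrow> \<exists>e\<in>carrier R. min_indicator R f e"
  shows "pp_ring (R Quot nilradical R)"
  unfolding pp_ring_Quot_iff[OF nilradical_ideal]
proof
  fix f assume f: "f \<in> carrier R"
  then obtain e where e: "e \<in> carrier R" "min_indicator R f e" using ind by blast
  then show "\<exists>e\<in>carrier R. e \<otimes> f \<ominus> f \<in> nilradical R
      \<and> (\<forall>a\<in>carrier R. a \<otimes> f \<in> nilradical R \<longrightarrow> a \<otimes> e \<in> nilradical R)"
    using min_indicator_mem[OF e(2) _ f e(1)] f
    by (intro bexI[of _ e]) (auto simp: nilradical_iff_min_primes)
qed

end

section \<open>Lifting idempotents\<close>

context cring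
begin

lemma comaximal_pow_left:
  assumes x: "x \<in> carrier R" and y: "y \<in> carrier R"
    and pq: "p \<in> carrier R" "q \<in> carrier R" "x \<otimes> p \<oplus> y \<otimes> q = \<one>"
  shows "\<exists>p'\<in>carrier R. \<exists>q'\<in>carrier R. x [^] (n::nat) \<otimes> p' \<oplus> y \<otimes> q' = \<one>"
proof (induction n)
  case 0
  have "x [^] (0::nat) \<otimes> \<one> \<oplus> y \<otimes> \<zero> = \<one>" using y by simp
  then show ?case by blast
next
  case (Suc n)
  then obtain p' q' where pq': "p' \<in> carrier R" "q' \<in> carrier R" "x [^] n \<otimes> p' \<oplus> y \<otimes> q' = \<one>"
    by blast
  define X W where "X = x [^] n" and "W = X \<otimes> p' \<otimes> q \<oplus> q' \<otimes> (x \<otimes> p \<oplus> y \<otimes> q)"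
  have X: "X \<in> carrier R" unfolding X_def using x by simp
  \<comment> \<open>multiply the relation for \<open>x [^] n\<close> by the one for \<open>x\<close>\<close>
  have "(X \<otimes> x) \<otimes> (p' \<otimes> p) \<oplus> y \<otimes> W = (X \<otimes> p' \<oplus> y \<otimes> q') \<otimes> (x \<otimes> p \<oplus> y \<otimes> q)"
    unfolding W_def using X x y pq(1,2) pq'(1,2) by algebra
  also have "\<dots> = \<one>" using pq(3) pq'(3) unfolding X_def by simp
  finally have "x [^] Suc n \<otimes> (p' \<otimes> p) \<oplus> y \<otimes> W = \<one>" unfolding X_def by (simp only: nat_pow_Suc)
  moreover have "p' \<otimes> p \<in> carrier R" "W \<in> carrier R"
    unfolding W_def using X x y pq(1,2) pq'(1,2) by simp_all
  ultimately show ?case by blast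
qed

lemma comaximal_pow:
  assumes x: "x \<in> carrier R" and y: "y \<in> carrier R" and "x \<oplus> y = \<one>"
  shows "\<exists>p\<in>carrier R. \<exists>q\<in>carrier R. x [^] (n::nat) \<otimes> p \<oplus> y [^] n \<otimes> q = \<one>"
proof -
  have "x \<otimes> \<one> \<oplus> y \<otimes> \<one> = \<one>" using assms by simp
  from comaximal_pow_left[OF x y one_closed one_closed this, of n]
  obtain p q where pq: "p \<in> carrier R" "q \<in> carrier R" "x [^] n \<otimes> p \<oplus> y \<otimes> q = \<one>"
    by blast
  then have "y \<otimes> q \<oplus> x [^] n \<otimes> p = \<one>"
    using a_comm[of "y \<otimes> q" "x [^] n \<otimes> p"] x y by simp
  from comaximal_pow_left[OF y nat_pow_closed[OF x] pq(2,1) this, of n]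
  obtain q' p' where pq': "q' \<in> carrier R" "p' \<in> carrier R" "y [^] n \<otimes> q' \<oplus> x [^] n \<otimes> p' = \<one>"
    by blast
  then have "x [^] n \<otimes> p' \<oplus> y [^] n \<otimes> q' = \<one>"
    using a_comm[of "x [^] n \<otimes> p'" "y [^] n \<otimes> q'"] x y by simp
  with pq'(1,2) show ?thesis by blast
qed

lemma lift_idempotent:
  assumes e: "e \<in> carrier R" and nil: "(e \<otimes> (\<one> \<ominus> e)) [^] (n::nat) = \<zero>"
  obtains p q where "p \<in> carrier R" "q \<in> carrier R"
    "(e [^] n \<otimes> p) \<otimes> (e [^] n \<otimes> p) = e [^] n \<otimes> p" "\<one> \<ominus> e [^] n \<otimes> p = (\<one> \<ominus> e) [^] n \<otimes> q"
proof -
  have oe: "\<one> \<ominus> e \<in> carrier R" using e by simp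
  have "e \<oplus> (\<one> \<ominus> e) = \<one>" using e by algebra
  then obtain p q where pq: "p \<in> carrier R" "q \<in> carrier R"
    "e [^] n \<otimes> p \<oplus> (\<one> \<ominus> e) [^] n \<otimes> q = \<one>"
    using comaximal_pow[OF e oe] by blast
  \<comment> \<open>\<open>E\<close> and \<open>F\<close> are comaximal with \<open>E F = 0\<close>, so \<open>E p\<close> and \<open>F q\<close> are complementary idempotents\<close>
  define E F where "E = e [^] n" and "F = (\<one> \<ominus> e) [^] n"
  have EF: "E \<in> carrier R" "F \<in> carrier R" "E \<otimes> F = \<zero>"
    unfolding E_def F_def using e oe nil nat_pow_distrib[OF e oe, of n] by simp_all
  have one: "E \<otimes> p \<oplus> F \<otimes> q = \<one>" using pq(3) unfolding E_def F_def .
  have "E \<otimes> p = (E \<otimes> p) \<otimes> (E \<otimes> p \<oplus> F \<otimes> q)" unfolding one using pq(1) EF(1) by simp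
  also have "\<dots> = (E \<otimes> p) \<otimes> (E \<otimes> p) \<oplus> (E \<otimes> F) \<otimes> (p \<otimes> q)"
    using pq(1,2) EF(1,2) by algebra
  also have "\<dots> = (E \<otimes> p) \<otimes> (E \<otimes> p)" using pq EF by simp
  finally have idem: "(E \<otimes> p) \<otimes> (E \<otimes> p) = E \<otimes> p" by (rule sym)
  have "\<one> \<ominus> E \<otimes> p = (E \<otimes> p \<oplus> F \<otimes> q) \<ominus> E \<otimes> p" unfolding one ..
  also have "\<dots> = F \<otimes> q" using pq(1,2) EF(1,2) by algebra
  finally show thesis using idem unfolding E_def F_def by (intro that[OF pq(1,2)])
qed

lemma idempotent_generator_if_idempotent_mod_nilradical:
  assumes f: "f \<in> carrier R" and e: "e \<in> carrier R"
    and n1: "(\<one> \<ominus> e) \<otimes> f \<in> nilradical R" and n2: "e \<otimes> (\<one> \<ominus> e) \<in> nilradical R"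
  obtains n :: nat and d r where "n \<ge> 1" "d \<in> carrier R" "r \<in> carrier R" "d \<otimes> d = d"
    "d \<otimes> f [^] n = f [^] n" "d = e \<otimes> r"
proof -
  obtain i j where i: "\<forall>k\<ge>i. ((\<one> \<ominus> e) \<otimes> f) [^] (k::nat) = \<zero>"
    and j: "\<forall>k\<ge>j. (e \<otimes> (\<one> \<ominus> e)) [^] (k::nat) = \<zero>"
    using nilradical_pow_eventually_zero[OF n1] nilradical_pow_eventually_zero[OF n2] by blast
  define n where "n = Suc (i + j)"
  have n: "n \<ge> 1" "((\<one> \<ominus> e) \<otimes> f) [^] n = \<zero>" "(e \<otimes> (\<one> \<ominus> e)) [^] n = \<zero>"
    unfolding n_def using i j e f by auto
  obtain p q where pq: "p \<in> carrier R" "q \<in> carrier R"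
    and idem: "(e [^] n \<otimes> p) \<otimes> (e [^] n \<otimes> p) = e [^] n \<otimes> p"
    and one_minus: "\<one> \<ominus> e [^] n \<otimes> p = (\<one> \<ominus> e) [^] n \<otimes> q"
    using e n(3) by (rule lift_idempotent)
  define d where "d = e [^] n \<otimes> p"
  have d: "d \<in> carrier R" "d \<otimes> d = d" unfolding d_def using e pq(1) idem by simp_all
  have "(\<one> \<ominus> d) \<otimes> f [^] n = q \<otimes> ((\<one> \<ominus> e) \<otimes> f) [^] n"
    unfolding d_def one_minus using e f pq(2) by (simp add: nat_pow_distrib m_ac)
  then have "d \<otimes> f [^] n = f [^] n"
    using one_minus_mult_eq_zero_iff[OF d(1) nat_pow_closed[OF f]] n(2) pq(2) by simp
  moreover obtain m where "n = Suc m" using n(1) by (cases n) auto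
  then have "d = e \<otimes> (e [^] m \<otimes> p)" unfolding d_def using e pq(1) by (simp add: m_ac)
  moreover have "e [^] m \<otimes> p \<in> carrier R" using e pq(1) by simp
  ultimately show thesis using that n(1) d by blast
qed

lemma annihilator_subset_if_primary:
  assumes prim: "\<And>M. maximalideal M R \<Longrightarrow> primary_at R M"
    and g: "g \<in> carrier R" and d: "d \<in> carrier R" "d \<otimes> d = d"
    and nil: "\<And>u. u \<in> carrier R \<Longrightarrow> u \<otimes> g \<in> nilradical R \<Longrightarrow> u \<otimes> d \<in> nilradical R"
  shows "annihilator R g \<subseteq> annihilator R d"
  unfolding annihilator_subset_iff
proof (intro ballI impI)
  fix a assume a: "a \<in> carrier R" "a \<otimes> g = \<zero>"
  show "a \<otimes> d = \<zero>"
  proof (rule eq_zero_if_locally_zero)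
    show "a \<otimes> d \<in> carrier R" using a d by simp
  next
    fix M assume M: "maximalideal M R"
    interpret M: primeideal M R using maximalideal_prime[OF M] .
    \<comment> \<open>either \<open>a\<close> dies at \<open>M\<close>, or \<open>u g\<close> is nilpotent for some \<open>u \<notin> M\<close>; then so is \<open>u d\<close>, and
      as \<open>d\<close> is idempotent a power of \<open>u\<close> kills \<open>d\<close>\<close>
    have "(\<exists>u\<in>carrier R - M. u \<otimes> a = \<zero>) \<or> (\<exists>u\<in>carrier R - M. \<exists>k::nat. u \<otimes> g [^] k = \<zero>)"
      using prim[OF M] a g unfolding primary_at_def by blast
    then show "\<exists>u\<in>carrier R - M. u \<otimes> (a \<otimes> d) = \<zero>"
    proof
      assume "\<exists>u\<in>carrier R - M. u \<otimes> a = \<zero>"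
      then show ?thesis using a(1) d(1) by (metis DiffD1 m_assoc l_null)
    next
      assume "\<exists>u\<in>carrier R - M. \<exists>k::nat. u \<otimes> g [^] k = \<zero>"
      then obtain u k where u: "u \<in> carrier R - M" "u \<otimes> g [^] (k::nat) = \<zero>" by blast
      then have "u \<otimes> g [^] k \<in> nilradical R" using ideal.I_zero_closed[OF nilradical_ideal] by simp
      then have "u \<otimes> g \<in> nilradical R" using mult_pow_mem_nilradical u(1) g by blast
      then obtain l where l: "u [^] (l::nat) \<otimes> d = \<zero>"
        using idempotent_mult_nilradical[OF _ d] nil u by blast
      have "u [^] l \<otimes> (a \<otimes> d) = a \<otimes> (u [^] l \<otimes> d)" using u a d by (simp add: m_lcomm)
      then show ?thesis using l a M.compl_pow_closed[OF u(1)] by auto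
    qed
  qed
qed

end

context cring
begin

lemma GPF_if_GPP:
  assumes "GPP_ring R"
  shows "GPF_ring R"
  unfolding GPF_ring_iff
proof
  fix f assume "f \<in> carrier R"
  then obtain n :: nat and e where "n \<ge> 1" "e \<in> carrier R" "e \<otimes> f [^] n = f [^] n"
    "annihilator R (f [^] n) \<subseteq> annihilator R e"
    using assms unfolding GPP_ring_iff by blast
  then show "\<exists>n\<ge>(1::nat). \<forall>a\<in>annihilator R (f [^] n).
      \<exists>e\<in>carrier R. e \<otimes> f [^] n = f [^] n \<and> a \<otimes> e = \<zero>"
    by (intro exI[of _ n]) (auto simp: annihilator_def)
qed

lemma min_quasi_compact_if_GPP:
  assumes "GPP_ring R"
  shows "min_quasi_compact R"
proof (rule min_quasi_compact_if_min_indicators)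
  fix f assume "f \<in> carrier R"
  then show "\<exists>e\<in>carrier R. min_indicator R f e"
    using assms min_indicator_if_projective_pow unfolding GPP_ring_iff by blast
qed

lemma quasi_pf_if_GPF:
  assumes "GPF_ring R"
  shows "quasi_pf_ring R"
  unfolding quasi_pf_ring_def quasi_pure_def
proof (intro ballI)
  fix f a assume f: "f \<in> carrier R" and "a \<in> annihilator R f"
  then have a: "a \<in> carrier R" "a \<otimes> f = \<zero>" by (auto simp: annihilator_def)
  obtain n :: nat where "n \<ge> 1" and flat: "\<forall>b\<in>annihilator R (a [^] n).
      \<exists>e\<in>carrier R. e \<otimes> a [^] n = a [^] n \<and> b \<otimes> e = \<zero>"
    using assms a(1) unfolding GPF_ring_iff by blast
  then obtain m where n: "n = Suc m" by (cases n) auto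
  have "f \<otimes> a [^] n = a [^] m \<otimes> (a \<otimes> f)" using a(1) f n by (simp add: m_ac)
  then have "f \<in> annihilator R (a [^] n)" using a f by (simp add: annihilator_def)
  then obtain e where e: "e \<in> carrier R" "e \<otimes> a [^] n = a [^] n" "f \<otimes> e = \<zero>"
    using flat by blast
  have z: "(\<one> \<ominus> e) \<otimes> a [^] n = \<zero>"
    using one_minus_mult_eq_zero_iff[OF e(1) nat_pow_closed[OF a(1)]] e(2) by simp
  have "(a \<otimes> (\<one> \<ominus> e)) [^] n = (\<one> \<ominus> e) [^] m \<otimes> ((\<one> \<ominus> e) \<otimes> a [^] n)"
    using a(1) e(1) n by (simp add: nat_pow_distrib m_ac)
  also have "\<dots> = \<zero>" using z e(1) by simp
  finally have "nilpotent_el R (a \<otimes> (\<one> \<ominus> e))" using a(1) e(1) unfolding nilpotent_el_def by auto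
  moreover have "e \<in> annihilator R f" using e(1,3) f by (simp add: annihilator_def m_comm)
  ultimately show "\<exists>g\<in>annihilator R f. nilpotent_el R (a \<otimes> (\<one> \<ominus> g))" by blast
qed

lemma primary_at_if_quasi_pf:
  assumes QP: "quasi_pf_ring R" and P: "primeideal P R"
  shows "primary_at R P"
  unfolding primary_at_def
proof (intro ballI impI)
  interpret P: primeideal P R by fact
  fix a b assume ab: "a \<in> carrier R" "b \<in> carrier R" "a \<otimes> b = \<zero>"
  then have "b \<in> annihilator R a" by (simp add: annihilator_def m_comm)
  then obtain c where c: "c \<in> carrier R" "c \<otimes> a = \<zero>" "nilpotent_el R (b \<otimes> (\<one> \<ominus> c))"
    using QP ab(1) unfolding quasi_pf_ring_def quasi_pure_def annihilator_def by blast
  show "(\<exists>u\<in>carrier R - P. u \<otimes> a = \<zero>) \<or> (\<exists>u\<in>carrier R - P. \<exists>k::nat. u \<otimes> b [^] k = \<zero>)"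
  proof (cases "c \<in> P")
    case False
    then show ?thesis using c by blast
  next
    case True
    then have oc: "\<one> \<ominus> c \<in> carrier R - P" using P.one_minus_notin c(1) by blast
    obtain k :: nat where "(b \<otimes> (\<one> \<ominus> c)) [^] k = \<zero>" using c(3) unfolding nilpotent_el_def by blast
    then have "(\<one> \<ominus> c) [^] k \<otimes> b [^] k = \<zero>" using ab(2) c(1) by (simp add: nat_pow_distrib m_comm)
    then show ?thesis using P.compl_pow_closed[OF oc] by blast
  qed
qed

lemma GPP_if_pp_Quot_nilradical:
  assumes pp: "pp_ring (R Quot nilradical R)" and prim: "\<And>M. maximalideal M R \<Longrightarrow> primary_at R M"
  shows "GPP_ring R"
  unfolding GPP_ring_iff
proof
  interpret N: ideal "nilradical R" R by (rule nilradical_ideal)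
  fix f assume f: "f \<in> carrier R"
  obtain e where e: "e \<in> carrier R" "e \<otimes> f \<ominus> f \<in> nilradical R"
    and ann: "\<And>a. a \<in> carrier R \<Longrightarrow> a \<otimes> f \<in> nilradical R \<Longrightarrow> a \<otimes> e \<in> nilradical R"
    using pp f unfolding pp_ring_Quot_iff[OF nilradical_ideal] by blast
  have oe: "\<one> \<ominus> e \<in> carrier R" using e(1) by simp
  have "(\<one> \<ominus> e) \<otimes> f = \<zero> \<ominus> (e \<otimes> f \<ominus> f)" using e(1) f by algebra
  then have n1: "(\<one> \<ominus> e) \<otimes> f \<in> nilradical R" using e(2) N.I_minus_closed N.I_zero_closed by simp
  have n2: "e \<otimes> (\<one> \<ominus> e) \<in> nilradical R" using ann[OF oe n1] e(1) oe by (simp add: m_comm)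
  obtain n :: nat and d r where n: "n \<ge> 1" and d: "d \<in> carrier R" and r: "r \<in> carrier R"
    and idem: "d \<otimes> d = d" and df: "d \<otimes> f [^] n = f [^] n" and dr: "d = e \<otimes> r"
    by (rule idempotent_generator_if_idempotent_mod_nilradical[OF f e(1) n1 n2])
  have "annihilator R (f [^] n) \<subseteq> annihilator R d"
  proof (rule annihilator_subset_if_primary[OF prim _ d idem])
    show "f [^] n \<in> carrier R" using f by simp
  next
    fix u assume u: "u \<in> carrier R" "u \<otimes> f [^] n \<in> nilradical R"
    then have "(u \<otimes> e) \<otimes> r \<in> nilradical R"
      using ann mult_pow_mem_nilradical f N.I_r_closed r by blast
    then show "u \<otimes> d \<in> nilradical R" using u(1) e(1) r dr by (simp add: m_assoc)
  qed
  then show "\<exists>n\<ge>(1::nat). \<exists>e\<in>carrier R. e \<otimes> f [^] n = f [^] n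
      \<and> annihilator R (f [^] n) \<subseteq> annihilator R e"
    using n d df by blast
qed

end

theorem theorem5p4:
  fixes R :: "'a ring"
  assumes "cring R"
  shows "(GPP_ring R \<longleftrightarrow> GPF_ring R \<and> min_quasi_compact R)
       \<and> (GPF_ring R \<and> min_quasi_compact R \<longleftrightarrow> quasi_pf_ring R \<and> min_quasi_compact R)
       \<and> (quasi_pf_ring R \<and> min_quasi_compact R \<longleftrightarrow>
            pp_ring (R Quot (nilradical R))
          \<and> (\<forall>M. maximalideal M R \<longrightarrow> primary_ring (localization R M)))"
proof -
  interpret cring R by fact
  have primary_iff: "primary_ring (localization R M) \<longleftrightarrow> primary_at R M" if "maximalideal M R" for M
    using primary_localization_iff maximalideal_prime[OF that] by blast
  have "GPP_ring R \<Longrightarrow> GPF_ring R \<and> min_quasi_compact R"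
    using GPF_if_GPP min_quasi_compact_if_GPP by blast
  moreover have "GPF_ring R \<Longrightarrow> quasi_pf_ring R"
    by (rule quasi_pf_if_GPF)
  moreover have "quasi_pf_ring R \<Longrightarrow> min_quasi_compact R \<Longrightarrow> pp_ring (R Quot nilradical R)"
    using pp_Quot_nilradical_if_min_indicators min_indicator_if_quasi_pf by blast
  moreover have "quasi_pf_ring R \<Longrightarrow> maximalideal M R \<Longrightarrow> primary_ring (localization R M)" for M
    using primary_at_if_quasi_pf primary_iff maximalideal_prime by blast
  moreover have "pp_ring (R Quot nilradical R) \<Longrightarrow> \<forall>M. maximalideal M R \<longrightarrow> primary_ring (localization R M)
      \<Longrightarrow> GPP_ring R"
    using GPP_if_pp_Quot_nilradical primary_iff by blast
  ultimately show ?thesis by blast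
qed

end
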